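(* Let $\Omega\subset\mathbb{R}^d$ be a bounded domain with smooth boundary, $T>0$, $0<\alpha<1$, $\Omega_T=\Omega\times(0,T]$, and let $u\in C(\overline{\Omega}_T)$ be a function for which $L^\alpha u:=\partial_{0+}^\alpha u-\Delta u$ is defined and satisfies $L^\alpha u=F(x,t)\le 0$ (respectively $\ge0$) in $\Omega_T$. Suppose $u$ attains its maximum $M$ (respectively minimum $m$) over $\overline{\Omega}_T$ at a point $\mathrm{x}_0=(x_0,t_0)\in\partial\Omega\times(0,T]$, that $\Omega_T$ satisfies an interior strong sphere property at $\mathrm{x}_0$, and that there is a neighbourhood $V$ of $\mathrm{x}_0$ such that $u<M$ (respectively $u>m$) in $\Omega_T\cap V$. Then $$\frac{\partial u}{\partial\nu}\Big|_{\mathrm{x}_0}>0\quad(\text{respectively }<0),$$ where $\nu$ is the outward normal direction at $\mathrm{x}_0$.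
   Context: $\partial_{0+}^\alpha u(x,t)=\frac{1}{\Gamma(1-\alpha)}\int_0^t\frac{\partial_\tau u(x,\tau)}{(t-\tau)^\alpha}d\tau$ is the Caputo derivative. The interior strong sphere property of $\Omega_T$ at $\mathrm{x}_0=(x_0,t_0)$ means that there is a ball $B_R(\overline{\mathrm{x}})=\{(x,t):|x-\overline{x}|^2+(t-t_0)^2\le R^2\}\subset\overline{\Omega}_T$ with center $\overline{\mathrm{x}}=(\overline{x},t_0)$, $\overline{x}\ne x_0$, whose boundary contains $\mathrm{x}_0$ (so $|x_0-\overline x|=R$) and whose interior lies in $\Omega_T$ (and can be chosen inside $\Omega_T\cap V$). *)

theory Defs
  imports "HOL-Analysis.Analysis"
begin

fun Ck_on :: "nat \<Rightarrow> 'a::euclidean_space set \<Rightarrow> ('a \<Rightarrow> real) \<Rightarrow> bool" where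
  "Ck_on 0 U f = continuous_on U f"
| "Ck_on (Suc k) U f = (continuous_on U f \<and>
     (\<forall>i\<in>Basis. \<exists>g. (\<forall>x\<in>U. ((\<lambda>s. f (x + s *\<^sub>R i)) has_real_derivative g x) (at 0))
                      \<and> Ck_on k U g))"

definition smooth_on :: "'a::euclidean_space set \<Rightarrow> ('a \<Rightarrow> real) \<Rightarrow> bool" where
  "smooth_on U f \<longleftrightarrow> (\<forall>k. Ck_on k U f)"

definition local_defining_fun :: "'a::euclidean_space set \<Rightarrow> 'a \<Rightarrow> 'a set \<Rightarrow> ('a \<Rightarrow> real) \<Rightarrow> bool" where
  "local_defining_fun \<Omega> p U \<phi> \<longleftrightarrow> open U \<and> p \<in> U \<and> smooth_on U \<phi> \<and>
     (\<forall>y\<in>U. \<exists>g. g \<noteq> 0 \<and> (\<phi> has_derivative (\<lambda>v. g \<bullet> v)) (at y)) \<and>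
     \<Omega> \<inter> U = {y\<in>U. \<phi> y < 0}"

definition smooth_boundary :: "'a::euclidean_space set \<Rightarrow> bool" where
  "smooth_boundary \<Omega> \<longleftrightarrow> (\<forall>p\<in>frontier \<Omega>. \<exists>U \<phi>. local_defining_fun \<Omega> p U \<phi>)"

definition bounded_smooth_domain :: "'a::euclidean_space set \<Rightarrow> bool" where
  "bounded_smooth_domain \<Omega> \<longleftrightarrow> open \<Omega> \<and> connected \<Omega> \<and> \<Omega> \<noteq> {} \<and> bounded \<Omega> \<and> smooth_boundary \<Omega>"

definition outward_normal :: "'a::euclidean_space set \<Rightarrow> 'a \<Rightarrow> 'a \<Rightarrow> bool" where
  "outward_normal \<Omega> p \<nu> \<longleftrightarrow> (\<exists>U \<phi> g. local_defining_fun \<Omega> p U \<phi> \<and> g \<noteq> 0 \<and>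
       (\<phi> has_derivative (\<lambda>v. g \<bullet> v)) (at p) \<and> \<nu> = g /\<^sub>R norm g)"

definition Omega_T :: "'a set \<Rightarrow> real \<Rightarrow> ('a \<times> real) set" where
  "Omega_T \<Omega> T = \<Omega> \<times> {0<..T}"

definition caputo :: "real \<Rightarrow> ('a \<times> real \<Rightarrow> real) \<Rightarrow> 'a \<Rightarrow> real \<Rightarrow> real" where
  "caputo \<alpha> u x t = (1 / Gamma (1 - \<alpha>)) *
      integral {0..t} (\<lambda>\<tau>. deriv (\<lambda>s. u (x, s)) \<tau> / (t - \<tau>) powr \<alpha>)"

definition caputo_defined :: "real \<Rightarrow> ('a \<times> real \<Rightarrow> real) \<Rightarrow> 'a \<Rightarrow> real \<Rightarrow> bool" where
  "caputo_defined \<alpha> u x t \<longleftrightarrow>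
     (\<forall>\<tau>\<in>{0<..<t}. (\<lambda>s. u (x, s)) differentiable (at \<tau>)) \<and>
     (\<lambda>\<tau>. deriv (\<lambda>s. u (x, s)) \<tau> / (t - \<tau>) powr \<alpha>) integrable_on {0..t}"

definition second_partial :: "('a::euclidean_space \<Rightarrow> real) \<Rightarrow> 'a \<Rightarrow> 'a \<Rightarrow> real" where
  "second_partial f i x = deriv (\<lambda>s. deriv (\<lambda>r. f (x + r *\<^sub>R i)) s) 0"

definition laplacian :: "('a::euclidean_space \<Rightarrow> real) \<Rightarrow> 'a \<Rightarrow> real" where
  "laplacian f x = (\<Sum>i\<in>Basis. second_partial f i x)"

definition laplacian_defined :: "('a::euclidean_space \<Rightarrow> real) \<Rightarrow> 'a \<Rightarrow> bool" where
  "laplacian_defined f x \<longleftrightarrow> (\<forall>i\<in>Basis.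
     (\<exists>e>0. \<forall>s\<in>{-e<..<e}. (\<lambda>r. f (x + r *\<^sub>R i)) differentiable (at s)) \<and>
     (\<lambda>s. deriv (\<lambda>r. f (x + r *\<^sub>R i)) s) differentiable (at 0))"

definition L_alpha :: "real \<Rightarrow> ('a::euclidean_space \<times> real \<Rightarrow> real) \<Rightarrow> 'a \<Rightarrow> real \<Rightarrow> real" where
  "L_alpha \<alpha> u x t = caputo \<alpha> u x t - laplacian (\<lambda>y. u (y, t)) x"

definition L_alpha_defined :: "real \<Rightarrow> ('a::euclidean_space \<times> real \<Rightarrow> real) \<Rightarrow> 'a \<Rightarrow> real \<Rightarrow> bool" where
  "L_alpha_defined \<alpha> u x t \<longleftrightarrow> caputo_defined \<alpha> u x t \<and> laplacian_defined (\<lambda>y. u (y, t)) x"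

definition interior_sphere_property :: "('a::euclidean_space \<times> real) set \<Rightarrow> 'a \<Rightarrow> real \<Rightarrow> bool" where
  "interior_sphere_property D x0 t0 \<longleftrightarrow> (\<exists>xb R. xb \<noteq> x0 \<and> norm (x0 - xb) = R \<and>
      {(x, t). norm (x - xb)^2 + (t - t0)^2 \<le> R^2} \<subseteq> closure D \<and>
      {(x, t). norm (x - xb)^2 + (t - t0)^2 < R^2} \<subseteq> D)"

definition has_normal_derivative ::
    "('a::euclidean_space \<times> real \<Rightarrow> real) \<Rightarrow> 'a \<Rightarrow> 'a \<Rightarrow> real \<Rightarrow> real \<Rightarrow> bool" where
  "has_normal_derivative u \<nu> x0 t0 L \<longleftrightarrow>
     ((\<lambda>h. (u (x0, t0) - u (x0 - h *\<^sub>R \<nu>, t0)) / h) \<longlongrightarrow> L) (at_right 0)"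

end

theory Submission
  imports Defs
begin

(* Hopf's barrier argument, with the Caputo derivative in place of the time derivative.
   Shrink the interior ball at (x0, t0) to a ball of radius rho centred at (xc, t0) that meets the
   boundary only at (x0, t0) and on which u < M = u (x0, t0) elsewhere.  For the Gaussian barrier
   v = exp (- gamma r^2) - exp (- gamma rho^2), r the distance to (xc, t0), and gamma large,
   L^alpha v < 0 near (x0, t0): the Caputo derivative of v is controlled by a weakly singular integral,
   while its Laplacian grows like gamma^2.  Since the Caputo derivative is nonnegative at a maximum in
   time and the Laplacian is nonpositive at a maximum in space, u - M + eps v, which is <= 0 away from
   (x0, t0), is <= 0 everywhere.  As v grows linearly along the inward normal, the normal derivative
   of u is at least eps gamma exp (- gamma rho^2) (nu . (x0 - xc)) > 0.  The minimum case follows by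
   applying this to - u. *)

section \<open>Weakly singular integrals and the Caputo derivative\<close>

lemma has_integral_powr_kernel:
  fixes t \<alpha> :: real
  assumes "0 < t" "\<alpha> < 1"
  shows "((\<lambda>\<tau>. (t - \<tau>) powr (-\<alpha>)) has_integral t powr (1 - \<alpha>) / (1 - \<alpha>)) {0..t}"
proof -
  define F where "F = (\<lambda>\<tau>. - ((t - \<tau>) powr (1 - \<alpha>) / (1 - \<alpha>)))"
  have cont: "continuous_on {0..t} F"
    unfolding F_def using assms
    by (intro continuous_intros continuous_on_powr') (auto intro!: continuous_intros)
  have deriv: "(F has_vector_derivative (t - \<tau>) powr (-\<alpha>)) (at \<tau>)" if "\<tau> \<in> {0<..<t}" for \<tau>
  proof -
    have "(F has_real_derivative - ((1 - \<alpha>) * (t - \<tau>) powr (1 - \<alpha> - 1) * (-1) / (1 - \<alpha>))) (at \<tau>)"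
      unfolding F_def using that by (auto intro!: derivative_eq_intros)
    then show ?thesis
      using assms by (simp add: has_real_derivative_iff_has_vector_derivative[symmetric])
  qed
  have "((\<lambda>\<tau>. (t - \<tau>) powr (-\<alpha>)) has_integral F t - F 0) {0..t}"
    using fundamental_theorem_of_calculus_interior[OF _ cont deriv] assms by auto
  then show ?thesis by (simp add: F_def)
qed

lemma weakly_singular_integral:
  fixes g :: "real \<Rightarrow> real"
  assumes t: "0 < t" and \<alpha>: "\<alpha> < 1"
    and g: "continuous_on {0..t} g" "\<And>\<tau>. \<tau> \<in> {0..t} \<Longrightarrow> \<bar>g \<tau>\<bar> \<le> B"
  shows "(\<lambda>\<tau>. g \<tau> / (t - \<tau>) powr \<alpha>) integrable_on {0..t}"
    and "\<bar>integral {0..t} (\<lambda>\<tau>. g \<tau> / (t - \<tau>) powr \<alpha>)\<bar> \<le> B * t powr (1 - \<alpha>) / (1 - \<alpha>)"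
proof -
  have kernel: "((\<lambda>\<tau>. B * (t - \<tau>) powr (-\<alpha>)) has_integral B * (t powr (1 - \<alpha>) / (1 - \<alpha>))) {0..t}"
    by (rule has_integral_mult_right[OF has_integral_powr_kernel[OF t \<alpha>]])
  have dominated: "\<bar>g \<tau> / (t - \<tau>) powr \<alpha>\<bar> \<le> B * (t - \<tau>) powr (-\<alpha>)" if "\<tau> \<in> {0..t}" for \<tau>
  proof (cases "\<tau> = t")
    case False
    then have pos: "(t - \<tau>) powr \<alpha> > 0" using that by auto
    have "\<bar>g \<tau> / (t - \<tau>) powr \<alpha>\<bar> = \<bar>g \<tau>\<bar> / (t - \<tau>) powr \<alpha>"
      using pos by (simp add: abs_div)
    also have "\<dots> \<le> B / (t - \<tau>) powr \<alpha>"
      using g(2)[OF that] pos by (simp add: divide_right_mono)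
    finally show ?thesis by (simp add: powr_minus_divide)
  qed simp
  have "(\<lambda>\<tau>. g \<tau> / (t - \<tau>) powr \<alpha>) \<in> borel_measurable (lebesgue_on {0..<t})"
  proof (rule continuous_imp_measurable_on_sets_lebesgue)
    show "continuous_on {0..<t} (\<lambda>\<tau>. g \<tau> / (t - \<tau>) powr \<alpha>)"
      by (intro continuous_intros continuous_on_subset[OF g(1)]) auto
  qed auto
  moreover have "(\<lambda>\<tau>. B * (t - \<tau>) powr (-\<alpha>)) integrable_on {0..<t}"
    by (rule integrable_spike_set[OF has_integral_integrable[OF kernel]])
      (auto intro: negligible_subset[of "{t}"])
  ultimately have "(\<lambda>\<tau>. g \<tau> / (t - \<tau>) powr \<alpha>) integrable_on {0..<t}"
    by (rule measurable_bounded_by_integrable_imp_integrable_real) (use dominated in auto)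
  then show int: "(\<lambda>\<tau>. g \<tau> / (t - \<tau>) powr \<alpha>) integrable_on {0..t}"
    by (rule integrable_spike_set) (auto intro: negligible_subset[of "{t}"])
  have "norm (integral {0..t} (\<lambda>\<tau>. g \<tau> / (t - \<tau>) powr \<alpha>))
      \<le> integral {0..t} (\<lambda>\<tau>. B * (t - \<tau>) powr (-\<alpha>))"
    by (rule integral_norm_bound_integral[OF int has_integral_integrable[OF kernel]])
      (use dominated in auto)
  then show "\<bar>integral {0..t} (\<lambda>\<tau>. g \<tau> / (t - \<tau>) powr \<alpha>)\<bar> \<le> B * t powr (1 - \<alpha>) / (1 - \<alpha>)"
    using integral_unique[OF kernel] by simp
qed

(* Integration by parts against the kernel (t - tau) powr (-alpha): the boundary term at 0 and the
   remaining integral are nonpositive because f <= f t. *)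
lemma caputo_truncated_integral_ge:
  fixes f Df :: "real \<Rightarrow> real"
  assumes d: "0 < d" "d < t" and \<alpha>: "0 < \<alpha>"
    and f: "continuous_on {0..t} f" "\<And>\<tau>. \<tau> \<in> {0<..<t} \<Longrightarrow> (f has_real_derivative Df \<tau>) (at \<tau>)"
    and max: "\<And>s. s \<in> {0..t} \<Longrightarrow> f s \<le> f t"
  shows "(f (t - d) - f t) * d powr (-\<alpha>) \<le> integral {0..t - d} (\<lambda>\<tau>. Df \<tau> / (t - \<tau>) powr \<alpha>)"
proof -
  define G where "G = (\<lambda>\<tau>. (f \<tau> - f t) * (t - \<tau>) powr (-\<alpha>))"
  define H where "H = (\<lambda>\<tau>. (f \<tau> - f t) * (\<alpha> * (t - \<tau>) powr (-\<alpha> - 1)))"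
  have "(G has_real_derivative (Df \<tau> / (t - \<tau>) powr \<alpha> + H \<tau>)) (at \<tau>)" if "\<tau> \<in> {0<..<t - d}" for \<tau>
  proof -
    have "(G has_real_derivative Df \<tau> * (t - \<tau>) powr (-\<alpha>) + (f \<tau> - f t) * ((-\<alpha>) * (t - \<tau>) powr (-\<alpha> - 1) * (-1))) (at \<tau>)"
      unfolding G_def using that d by (auto intro!: derivative_eq_intros f(2))
    then show ?thesis by (simp add: H_def powr_minus_divide)
  qed
  moreover have "continuous_on {0..t - d} G"
    unfolding G_def using d by (intro continuous_intros continuous_on_subset[OF f(1)]) auto
  ultimately have ftc: "((\<lambda>\<tau>. Df \<tau> / (t - \<tau>) powr \<alpha> + H \<tau>) has_integral G (t - d) - G 0) {0..t - d}"
    using d by (intro fundamental_theorem_of_calculus_interior)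
      (auto simp: has_real_derivative_iff_has_vector_derivative[symmetric])
  have H_int: "H integrable_on {0..t - d}"
    unfolding H_def using d
    by (intro integrable_continuous_real continuous_intros continuous_on_subset[OF f(1)]) auto
  have "integral {0..t - d} (\<lambda>\<tau>. Df \<tau> / (t - \<tau>) powr \<alpha>) = G (t - d) - G 0 - integral {0..t - d} H"
    using has_integral_diff[OF ftc integrable_integral[OF H_int]] by (simp add: integral_unique)
  moreover have "integral {0..t - d} H \<le> 0"
  proof -
    have "H \<tau> \<le> 0" if "\<tau> \<in> {0..t - d}" for \<tau>
      unfolding H_def using max[of \<tau>] that d \<alpha> by (intro mult_nonpos_nonneg) auto
    then show ?thesis
      using integral_le[OF H_int integrable_0] by (simp add: integral_0)
  qed
  moreover have "G 0 \<le> 0"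
    unfolding G_def using max[of 0] d by (intro mult_nonpos_nonneg) auto
  moreover have "G (t - d) = (f (t - d) - f t) * d powr (-\<alpha>)"
    by (simp add: G_def)
  ultimately show ?thesis by linarith
qed

lemma difference_quotient_powr_tendsto_zero:
  fixes f :: "real \<Rightarrow> real"
  assumes f: "(f has_real_derivative D) (at t)" and \<alpha>: "\<alpha> < 1"
  shows "((\<lambda>d. (f (t - d) - f t) * d powr (-\<alpha>)) \<longlongrightarrow> 0) (at_right 0)"
proof -
  have "((\<lambda>d. t - d) has_real_derivative -1) (at 0)"
    by (auto intro!: derivative_eq_intros)
  then have "((\<lambda>d. f (t - d)) has_real_derivative - D) (at 0)"
    using DERIV_chain2[of f D "\<lambda>d. t - d" 0 "-1"] f by simp
  then have "((\<lambda>d. (f (t - d) - f t) / d) \<longlongrightarrow> - D) (at_right 0)"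
    by (auto dest!: DERIV_D simp: filterlim_at_split)
  moreover have "((\<lambda>d. d powr (1 - \<alpha>)) \<longlongrightarrow> 0) (at_right 0)"
    using \<alpha> by (intro tendsto_zero_powrI[where b = "1 - \<alpha>"])
      (auto intro!: tendsto_intros eventually_at_rightI[of 0 1])
  ultimately have "((\<lambda>d. (f (t - d) - f t) / d * d powr (1 - \<alpha>)) \<longlongrightarrow> - D * 0) (at_right 0)"
    by (rule tendsto_mult)
  moreover have "\<forall>\<^sub>F d in at_right 0. (f (t - d) - f t) / d * d powr (1 - \<alpha>) = (f (t - d) - f t) * d powr (-\<alpha>)"
    by (auto intro!: eventually_at_rightI[of 0 1] simp: powr_diff powr_minus_divide)
  ultimately show ?thesis by (simp add: tendsto_cong)
qed

lemma caputo_integral_nonneg_at_max: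
  fixes f Df :: "real \<Rightarrow> real"
  assumes t: "0 < t" and \<alpha>: "0 < \<alpha>" "\<alpha> < 1"
    and f: "continuous_on {0..t} f" "\<And>\<tau>. \<tau> \<in> {0<..t} \<Longrightarrow> (f has_real_derivative Df \<tau>) (at \<tau>)"
    and max: "\<And>s. s \<in> {0..t} \<Longrightarrow> f s \<le> f t"
    and int: "(\<lambda>\<tau>. Df \<tau> / (t - \<tau>) powr \<alpha>) integrable_on {0..t}"
  shows "0 \<le> integral {0..t} (\<lambda>\<tau>. Df \<tau> / (t - \<tau>) powr \<alpha>)"
proof -
  define I where "I = (\<lambda>s. integral {0..s} (\<lambda>\<tau>. Df \<tau> / (t - \<tau>) powr \<alpha>))"
  have "(I \<longlongrightarrow> I t) (at t within {0..t})"
    using indefinite_integral_continuous_1[OF int] t by (simp add: I_def continuous_on_def)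
  moreover have "filterlim (\<lambda>d. t - d) (at t within {0..t}) (at_right 0)"
  proof (rule filterlim_at_withinI)
    show "filterlim (\<lambda>d. t - d) (nhds t) (at_right 0)"
      by (auto intro!: tendsto_eq_intros)
    show "\<forall>\<^sub>F d in at_right 0. t - d \<in> {0..t} - {t}"
      using t by (auto intro!: eventually_at_rightI[of 0 t])
  qed
  ultimately have lim: "((\<lambda>d. I (t - d)) \<longlongrightarrow> I t) (at_right 0)"
    by (rule filterlim_compose)
  have "((\<lambda>d. (f (t - d) - f t) * d powr (-\<alpha>)) \<longlongrightarrow> 0) (at_right 0)"
    using difference_quotient_powr_tendsto_zero[OF f(2) \<alpha>(2)] t by simp
  moreover have "\<forall>\<^sub>F d in at_right 0. (f (t - d) - f t) * d powr (-\<alpha>) \<le> I (t - d)"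
    unfolding I_def using t \<alpha> f max
    by (intro eventually_at_rightI[of 0 t] caputo_truncated_integral_ge) auto
  ultimately show ?thesis
    using tendsto_le[OF _ lim] by (simp add: I_def)
qed

lemma caputo_nonneg_at_max:
  assumes t: "0 < t" and \<alpha>: "0 < \<alpha>" "\<alpha> < 1"
    and defined: "caputo_defined \<alpha> u x t" and diff: "(\<lambda>s. u (x, s)) differentiable (at t)"
    and cont: "continuous_on {0..t} (\<lambda>s. u (x, s))"
    and max: "\<And>s. s \<in> {0..t} \<Longrightarrow> u (x, s) \<le> u (x, t)"
  shows "0 \<le> caputo \<alpha> u x t"
proof -
  have "((\<lambda>s. u (x, s)) has_real_derivative deriv (\<lambda>s. u (x, s)) \<tau>) (at \<tau>)" if "\<tau> \<in> {0<..t}" for \<tau>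
    using defined diff that
    by (cases "\<tau> = t") (auto simp: caputo_defined_def DERIV_deriv_iff_real_differentiable)
  then have "0 \<le> integral {0..t} (\<lambda>\<tau>. deriv (\<lambda>s. u (x, s)) \<tau> / (t - \<tau>) powr \<alpha>)"
    using defined by (intro caputo_integral_nonneg_at_max[OF t \<alpha> cont _ max]) (auto simp: caputo_defined_def)
  moreover have "0 < Gamma (1 - \<alpha>)"
    using \<alpha> by (simp add: Gamma_real_pos)
  ultimately show ?thesis
    by (simp add: caputo_def)
qed

section \<open>The operator L^alpha\<close>

lemma closure_Omega_T:
  assumes "0 < T"
  shows "closure (Omega_T \<Omega> T) = closure \<Omega> \<times> {0..T}"
  using assms by (simp add: Omega_T_def closure_Times)

lemma interior_Omega_T:
  assumes "open \<Omega>"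
  shows "interior (Omega_T \<Omega> T) = \<Omega> \<times> {0<..<T}"
  using assms by (simp add: Omega_T_def interior_Times interior_open)

lemma second_derivative_nonpos_at_local_max:
  fixes F DF :: "real \<Rightarrow> real"
  assumes e: "0 < e"
    and F: "\<And>r. r \<in> {-e<..<e} \<Longrightarrow> (F has_real_derivative DF r) (at r)"
    and DF: "(DF has_real_derivative D2) (at 0)"
    and max: "\<And>r. r \<in> {-e<..<e} \<Longrightarrow> F r \<le> F 0"
  shows "D2 \<le> 0"
proof (rule ccontr)
  assume "\<not> D2 \<le> 0"
  moreover have "DF 0 = 0"
    using DERIV_local_max[OF F[of 0] e] max e by (auto simp: dist_real_def abs_less_iff)
  ultimately obtain d where d: "0 < d" "\<And>h. 0 < h \<Longrightarrow> h < d \<Longrightarrow> 0 < DF h"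
    using DERIV_pos_inc_right[OF DF] by force
  define h where "h = min d e / 2"
  have h: "0 < h" "h < d" "h < e"
    using d e by (auto simp: h_def)
  then obtain z where z: "0 < z" "z < h" "F h - F 0 = h * DF z"
    using MVT2[of 0 h F DF] F by force
  then have "0 < F h - F 0"
    using d(2)[of z] h by simp
  then show False
    using max[of h] h by auto
qed

lemma laplacian_nonpos_at_local_max:
  fixes f :: "'a::euclidean_space \<Rightarrow> real"
  assumes defined: "laplacian_defined f x" and e: "0 < e"
    and max: "\<And>y. y \<in> ball x e \<Longrightarrow> f y \<le> f x"
  shows "laplacian f x \<le> 0"
  unfolding laplacian_def
proof (rule sum_nonpos)
  fix i :: 'a
  assume i: "i \<in> Basis"
  define F where "F = (\<lambda>r. f (x + r *\<^sub>R i))"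
  obtain e1 where e1: "0 < e1" "\<And>r. r \<in> {-e1<..<e1} \<Longrightarrow> F differentiable (at r)"
    and DF: "deriv F differentiable (at 0)"
    using defined i unfolding laplacian_defined_def F_def by blast
  define e2 where "e2 = min e e1"
  have e2: "0 < e2" "e2 \<le> e" "e2 \<le> e1"
    using e e1 by (auto simp: e2_def)
  show "second_partial f i x \<le> 0"
    unfolding second_partial_def F_def[symmetric]
  proof (rule second_derivative_nonpos_at_local_max[OF e2(1)])
    show "(F has_real_derivative deriv F r) (at r)" if "r \<in> {-e2<..<e2}" for r
      using e1(2)[of r] that e2 by (simp add: DERIV_deriv_iff_real_differentiable)
    show "(deriv F has_real_derivative deriv (deriv F) 0) (at 0)"
      using DF by (simp add: DERIV_deriv_iff_real_differentiable)
    show "F r \<le> F 0" if "r \<in> {-e2<..<e2}" for r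
      unfolding F_def using max[of "x + r *\<^sub>R i"] that i e2 by (auto simp: dist_norm abs_less_iff)
  qed
qed

lemma caputo_lincomb:
  assumes u: "caputo_defined \<alpha> u x t" and v: "caputo_defined \<alpha> v x t"
  shows "caputo_defined \<alpha> (\<lambda>p. a * u p + b * v p + c) x t"
    and "caputo \<alpha> (\<lambda>p. a * u p + b * v p + c) x t = a * caputo \<alpha> u x t + b * caputo \<alpha> v x t"
proof -
  define U V W where "U = (\<lambda>s. u (x, s))" and "V = (\<lambda>s. v (x, s))"
    and "W = (\<lambda>s. a * u (x, s) + b * v (x, s) + c)"
  have U: "\<And>\<tau>. \<tau> \<in> {0<..<t} \<Longrightarrow> (U has_real_derivative deriv U \<tau>) (at \<tau>)"
    and V: "\<And>\<tau>. \<tau> \<in> {0<..<t} \<Longrightarrow> (V has_real_derivative deriv V \<tau>) (at \<tau>)"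
    using u v by (auto simp: caputo_defined_def U_def V_def DERIV_deriv_iff_real_differentiable)
  have W: "(W has_real_derivative a * deriv U \<tau> + b * deriv V \<tau>) (at \<tau>)" if "\<tau> \<in> {0<..<t}" for \<tau>
    unfolding W_def using U[OF that] V[OF that]
    by (auto intro!: derivative_eq_intros simp: U_def V_def)
  have comb: "((\<lambda>\<tau>. a * (deriv U \<tau> / (t - \<tau>) powr \<alpha>) + b * (deriv V \<tau> / (t - \<tau>) powr \<alpha>))
      has_integral a * integral {0..t} (\<lambda>\<tau>. deriv U \<tau> / (t - \<tau>) powr \<alpha>)
                 + b * integral {0..t} (\<lambda>\<tau>. deriv V \<tau> / (t - \<tau>) powr \<alpha>)) {0..t}"
    using u v unfolding caputo_defined_def U_def V_def
    by (intro has_integral_add has_integral_mult_right integrable_integral) auto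
  have int: "((\<lambda>\<tau>. deriv W \<tau> / (t - \<tau>) powr \<alpha>)
      has_integral a * integral {0..t} (\<lambda>\<tau>. deriv U \<tau> / (t - \<tau>) powr \<alpha>)
                 + b * integral {0..t} (\<lambda>\<tau>. deriv V \<tau> / (t - \<tau>) powr \<alpha>)) {0..t}"
    \<comment> \<open>at the endpoints 0 and t, deriv may take junk values\<close>
    by (rule has_integral_spike[OF negligible_finite[of "{0, t}"] _ comb])
      (auto simp: DERIV_imp_deriv[OF W] add_divide_distrib)
  show "caputo_defined \<alpha> (\<lambda>p. a * u p + b * v p + c) x t"
    using int W unfolding caputo_defined_def W_def real_differentiable_def by fastforce
  show "caputo \<alpha> (\<lambda>p. a * u p + b * v p + c) x t = a * caputo \<alpha> u x t + b * caputo \<alpha> v x t"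
    using integral_unique[OF int] unfolding caputo_def W_def U_def V_def
    by (simp add: algebra_simps)
qed

lemma second_partial_lincomb:
  fixes f g :: "'a::euclidean_space \<Rightarrow> real" and a b c :: real
  assumes f: "laplacian_defined f x" and g: "laplacian_defined g x" and i: "i \<in> Basis"
  defines "h \<equiv> \<lambda>y. a * f y + b * g y + c"
  shows "\<exists>e>0. \<forall>s\<in>{-e<..<e}. (\<lambda>r. h (x + r *\<^sub>R i)) differentiable (at s)"
    and "((\<lambda>s. deriv (\<lambda>r. h (x + r *\<^sub>R i)) s) has_real_derivative
          a * second_partial f i x + b * second_partial g i x) (at 0)"
proof -
  define F G H where "F = (\<lambda>r. f (x + r *\<^sub>R i))" and "G = (\<lambda>r. g (x + r *\<^sub>R i))"
    and "H = (\<lambda>r. h (x + r *\<^sub>R i))"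
  obtain e1 e2 where e: "0 < e1" "\<And>r. r \<in> {-e1<..<e1} \<Longrightarrow> F differentiable (at r)"
      "0 < e2" "\<And>r. r \<in> {-e2<..<e2} \<Longrightarrow> G differentiable (at r)"
    and DF: "deriv F differentiable (at 0)" and DG: "deriv G differentiable (at 0)"
    using f g i unfolding laplacian_defined_def F_def G_def by meson
  define e where "e = min e1 e2"
  have e_le: "0 < e" "e \<le> e1" "e \<le> e2"
    using e(1,3) by (auto simp: e_def)
  have H: "(H has_real_derivative a * deriv F r + b * deriv G r) (at r)" if "r \<in> {-e<..<e}" for r
  proof -
    have "(F has_real_derivative deriv F r) (at r)" "(G has_real_derivative deriv G r) (at r)"
      using e(2)[of r] e(4)[of r] that e_le by (auto simp: DERIV_deriv_iff_real_differentiable)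
    then show ?thesis
      unfolding H_def h_def by (auto intro!: derivative_eq_intros simp: F_def G_def)
  qed
  show "\<exists>e>0. \<forall>s\<in>{-e<..<e}. (\<lambda>r. h (x + r *\<^sub>R i)) differentiable (at s)"
  proof (intro exI[of _ e] conjI ballI)
    show "(\<lambda>r. h (x + r *\<^sub>R i)) differentiable (at s)" if "s \<in> {-e<..<e}" for s
      using H[OF that] unfolding H_def real_differentiable_def by blast
  qed (rule e_le(1))
  have "\<forall>\<^sub>F r in nhds 0. deriv H r = a * deriv F r + b * deriv G r"
  proof (rule eventually_nhds_in_open[of "{-e<..<e}", THEN eventually_mono])
    show "open {-e<..<e}" "(0::real) \<in> {-e<..<e}"
      using e_le(1) by auto
  qed (rule DERIV_imp_deriv[OF H])
  moreover have "((\<lambda>r. a * deriv F r + b * deriv G r) has_real_derivative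
      a * deriv (deriv F) 0 + b * deriv (deriv G) 0) (at 0)"
    using DF DG unfolding DERIV_deriv_iff_real_differentiable[symmetric]
    by (auto intro!: derivative_eq_intros)
  ultimately show "((\<lambda>s. deriv (\<lambda>r. h (x + r *\<^sub>R i)) s) has_real_derivative
      a * second_partial f i x + b * second_partial g i x) (at 0)"
    unfolding second_partial_def H_def[symmetric] F_def[symmetric] G_def[symmetric]
    by (subst DERIV_cong_ev[OF refl]) auto
qed

lemma laplacian_lincomb:
  fixes f g :: "'a::euclidean_space \<Rightarrow> real"
  assumes f: "laplacian_defined f x" and g: "laplacian_defined g x"
  shows "laplacian_defined (\<lambda>y. a * f y + b * g y + c) x"
    and "laplacian (\<lambda>y. a * f y + b * g y + c) x = a * laplacian f x + b * laplacian g x"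
proof -
  note partial = second_partial_lincomb[OF f g, where a = a and b = b and c = c]
  show "laplacian_defined (\<lambda>y. a * f y + b * g y + c) x"
    using partial unfolding laplacian_defined_def by (auto simp: real_differentiable_def)
  have "second_partial (\<lambda>y. a * f y + b * g y + c) i x
      = a * second_partial f i x + b * second_partial g i x" if "i \<in> Basis" for i
    using DERIV_imp_deriv[OF partial(2)[OF that]] by (simp add: second_partial_def)
  then show "laplacian (\<lambda>y. a * f y + b * g y + c) x = a * laplacian f x + b * laplacian g x"
    by (simp add: laplacian_def sum.distrib sum_distrib_left)
qed

lemma L_alpha_lincomb:
  assumes "L_alpha_defined \<alpha> u x t" "L_alpha_defined \<alpha> v x t"
  shows "L_alpha_defined \<alpha> (\<lambda>p. a * u p + b * v p + c) x t"
    and "L_alpha \<alpha> (\<lambda>p. a * u p + b * v p + c) x t = a * L_alpha \<alpha> u x t + b * L_alpha \<alpha> v x t"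
  using assms caputo_lincomb[of \<alpha> u x t v a b c] laplacian_lincomb[of "\<lambda>y. u (y, t)" x "\<lambda>y. v (y, t)" a b c]
  by (auto simp: L_alpha_defined_def L_alpha_def right_diff_distrib)

lemma L_alpha_uminus:
  assumes "L_alpha_defined \<alpha> u x t"
  shows "L_alpha_defined \<alpha> (\<lambda>p. - u p) x t" and "L_alpha \<alpha> (\<lambda>p. - u p) x t = - L_alpha \<alpha> u x t"
proof -
  have "(\<lambda>p. - u p) = (\<lambda>p. (-1) * u p + 0 * u p + 0)"
    by simp
  then show "L_alpha_defined \<alpha> (\<lambda>p. - u p) x t" "L_alpha \<alpha> (\<lambda>p. - u p) x t = - L_alpha \<alpha> u x t"
    using L_alpha_lincomb[OF assms assms, of "-1" 0 0] by simp_all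
qed

lemma L_alpha_nonneg_at_max:
  fixes w :: "'a::euclidean_space \<times> real \<Rightarrow> real"
  assumes \<Omega>: "open \<Omega>" "x \<in> \<Omega>" and t: "0 < t" "t \<le> T" and \<alpha>: "0 < \<alpha>" "\<alpha> < 1"
    and cont: "continuous_on (closure (Omega_T \<Omega> T)) w"
    and max: "\<And>p. p \<in> closure (Omega_T \<Omega> T) \<Longrightarrow> w p \<le> w (x, t)"
    and defined: "L_alpha_defined \<alpha> w x t" and diff: "(\<lambda>s. w (x, s)) differentiable (at t)"
  shows "0 \<le> L_alpha \<alpha> w x t"
proof -
  have segment: "(x, s) \<in> closure (Omega_T \<Omega> T)" if "s \<in> {0..t}" for s
    using that t \<Omega>(2) closure_subset by (auto simp: closure_Omega_T)
  have "0 \<le> caputo \<alpha> w x t"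
  proof (rule caputo_nonneg_at_max[OF t(1) \<alpha> _ diff])
    show "caputo_defined \<alpha> w x t"
      using defined by (simp add: L_alpha_defined_def)
    show "continuous_on {0..t} (\<lambda>s. w (x, s))"
      using segment by (intro continuous_on_compose2[OF cont]) (auto intro!: continuous_intros)
  qed (use segment max in auto)
  moreover obtain e where e: "0 < e" "ball x e \<subseteq> \<Omega>"
    using \<Omega> open_contains_ball by blast
  have "laplacian (\<lambda>y. w (y, t)) x \<le> 0"
  proof (rule laplacian_nonpos_at_local_max[OF _ e(1)])
    show "laplacian_defined (\<lambda>y. w (y, t)) x"
      using defined by (simp add: L_alpha_defined_def)
    show "w (y, t) \<le> w (x, t)" if "y \<in> ball x e" for y
    proof (rule max)
      have "y \<in> closure \<Omega>"
        using that e closure_subset by blast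
      then show "(y, t) \<in> closure (Omega_T \<Omega> T)"
        using t by (simp add: closure_Omega_T)
    qed
  qed
  ultimately show ?thesis
    by (simp add: L_alpha_def)
qed

section \<open>A Gaussian barrier\<close>

lemma dist_Pair_sq:
  fixes x y :: "'a::real_normed_vector" and t s :: real
  shows "dist (x, t) (y, s)^2 = norm (x - y)^2 + (t - s)^2"
  by (simp add: dist_norm norm_Pair)

definition gaussian_barrier :: "real \<Rightarrow> 'a::real_normed_vector \<Rightarrow> real \<Rightarrow> 'a \<times> real \<Rightarrow> real" where
  "gaussian_barrier \<gamma> xc t0 p = exp (- \<gamma> * (norm (fst p - xc)^2 + (snd p - t0)^2))"

lemma continuous_on_gaussian_barrier [continuous_intros]:
  "continuous_on S (gaussian_barrier \<gamma> xc t0)"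
  unfolding gaussian_barrier_def by (intro continuous_intros)

lemma gaussian_barrier_dist:
  fixes xc :: "'a::real_normed_vector"
  shows "gaussian_barrier \<gamma> xc t0 p = exp (- \<gamma> * dist p (xc, t0)^2)"
  by (cases p) (simp add: gaussian_barrier_def dist_Pair_sq)

lemma gaussian_barrier_le_1:
  assumes "0 \<le> \<gamma>"
  shows "gaussian_barrier \<gamma> xc t0 p \<le> 1"
  using assms by (simp add: gaussian_barrier_def)

lemma gaussian_barrier_time_deriv:
  "((\<lambda>s. gaussian_barrier \<gamma> xc t0 (x, s)) has_real_derivative
      - 2 * \<gamma> * (\<tau> - t0) * gaussian_barrier \<gamma> xc t0 (x, \<tau>)) (at \<tau>)"
  unfolding gaussian_barrier_def by (auto intro!: derivative_eq_intros simp: algebra_simps)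

lemma norm_add_scaleR_Basis_sq:
  fixes x xc i :: "'a::euclidean_space"
  assumes "i \<in> Basis"
  shows "norm (x + r *\<^sub>R i - xc)^2 = norm (x - xc)^2 + 2 * r * ((x - xc) \<bullet> i) + r^2"
proof -
  have "x + r *\<^sub>R i - xc = (x - xc) + r *\<^sub>R i"
    by (simp add: algebra_simps)
  then show ?thesis
    using assms unfolding power2_norm_eq_inner
    by (simp add: inner_add_left inner_add_right inner_commute power2_eq_square algebra_simps)
qed

lemma gaussian_barrier_space_deriv:
  fixes x xc i :: "'a::euclidean_space"
  assumes "i \<in> Basis"
  shows "((\<lambda>r. gaussian_barrier \<gamma> xc t0 (x + r *\<^sub>R i, t)) has_real_derivative
      - 2 * \<gamma> * ((x - xc) \<bullet> i + r) * gaussian_barrier \<gamma> xc t0 (x + r *\<^sub>R i, t)) (at r)"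
  unfolding gaussian_barrier_def fst_conv snd_conv norm_add_scaleR_Basis_sq[OF assms]
  by (auto intro!: derivative_eq_intros simp: power2_eq_square algebra_simps)

lemma sum_Basis_inner_sq:
  fixes y :: "'a::euclidean_space"
  shows "(\<Sum>i\<in>Basis. (y \<bullet> i)^2) = norm y ^ 2"
  unfolding power2_norm_eq_inner by (subst euclidean_inner) (simp add: power2_eq_square)

lemma laplacian_gaussian_barrier:
  fixes x xc :: "'a::euclidean_space"
  shows "laplacian_defined (\<lambda>y. gaussian_barrier \<gamma> xc t0 (y, t)) x"
    and "laplacian (\<lambda>y. gaussian_barrier \<gamma> xc t0 (y, t)) x
           = (4 * \<gamma>^2 * norm (x - xc)^2 - 2 * \<gamma> * DIM('a)) * gaussian_barrier \<gamma> xc t0 (x, t)"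
proof -
  have second: "(deriv (\<lambda>r. gaussian_barrier \<gamma> xc t0 (x + r *\<^sub>R i, t)) has_real_derivative
      (4 * \<gamma>^2 * ((x - xc) \<bullet> i)^2 - 2 * \<gamma>) * gaussian_barrier \<gamma> xc t0 (x, t)) (at 0)"
    if i: "i \<in> Basis" for i
  proof -
    have first: "deriv (\<lambda>r. gaussian_barrier \<gamma> xc t0 (x + r *\<^sub>R i, t))
        = (\<lambda>r. - 2 * \<gamma> * ((x - xc) \<bullet> i + r) * gaussian_barrier \<gamma> xc t0 (x + r *\<^sub>R i, t))"
      by (rule ext) (rule DERIV_imp_deriv[OF gaussian_barrier_space_deriv[OF i]])
    have lin: "((\<lambda>r. - 2 * \<gamma> * ((x - xc) \<bullet> i + r)) has_real_derivative - 2 * \<gamma>) (at 0)"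
      by (auto intro!: derivative_eq_intros)
    from DERIV_mult'[OF lin gaussian_barrier_space_deriv[OF i]] show ?thesis
      unfolding first by (rule DERIV_cong) (simp add: power2_eq_square algebra_simps)
  qed
  show "laplacian_defined (\<lambda>y. gaussian_barrier \<gamma> xc t0 (y, t)) x"
    unfolding laplacian_defined_def real_differentiable_def
    using second gaussian_barrier_space_deriv by (blast intro: zero_less_one)
  have "laplacian (\<lambda>y. gaussian_barrier \<gamma> xc t0 (y, t)) x
      = (\<Sum>i\<in>Basis. (4 * \<gamma>^2 * ((x - xc) \<bullet> i)^2 - 2 * \<gamma>) * gaussian_barrier \<gamma> xc t0 (x, t))"
    unfolding laplacian_def second_partial_def using DERIV_imp_deriv[OF second] by simp
  also have "\<dots> = (\<Sum>i\<in>Basis. 4 * \<gamma>^2 * ((x - xc) \<bullet> i)^2 - 2 * \<gamma>) * gaussian_barrier \<gamma> xc t0 (x, t)"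
    by (simp add: sum_distrib_right)
  also have "(\<Sum>i\<in>Basis. 4 * \<gamma>^2 * ((x - xc) \<bullet> i)^2 - 2 * \<gamma>) = 4 * \<gamma>^2 * norm (x - xc)^2 - 2 * \<gamma> * DIM('a)"
    by (simp add: sum_subtractf sum_Basis_inner_sq flip: sum_distrib_left)
  finally show "laplacian (\<lambda>y. gaussian_barrier \<gamma> xc t0 (y, t)) x
      = (4 * \<gamma>^2 * norm (x - xc)^2 - 2 * \<gamma> * DIM('a)) * gaussian_barrier \<gamma> xc t0 (x, t)" .
qed

lemma gaussian_barrier_time_deriv_bound:
  assumes "0 \<le> \<gamma>" "\<tau> \<in> {0..T}" "t0 \<in> {0..T}"
  shows "\<bar>- 2 * \<gamma> * (\<tau> - t0) * gaussian_barrier \<gamma> xc t0 (x, \<tau>)\<bar> \<le> 2 * \<gamma> * T * exp (- \<gamma> * norm (x - xc)^2)"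
proof -
  have "\<bar>\<tau> - t0\<bar> \<le> T"
    using assms by auto
  then have "\<bar>- 2 * \<gamma> * (\<tau> - t0)\<bar> \<le> 2 * \<gamma> * T"
    using assms(1) by (simp add: abs_mult mult_left_mono)
  moreover have "gaussian_barrier \<gamma> xc t0 (x, \<tau>) \<le> exp (- \<gamma> * norm (x - xc)^2)"
    using assms(1) by (simp add: gaussian_barrier_def mult_left_mono)
  ultimately have "\<bar>- 2 * \<gamma> * (\<tau> - t0)\<bar> * gaussian_barrier \<gamma> xc t0 (x, \<tau>) \<le> 2 * \<gamma> * T * exp (- \<gamma> * norm (x - xc)^2)"
    by (rule mult_mono) (use assms in \<open>auto simp: gaussian_barrier_def\<close>)
  then show ?thesis
    by (simp add: abs_mult gaussian_barrier_def)
qed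

lemma caputo_gaussian_barrier:
  fixes x xc :: "'a::euclidean_space"
  assumes t: "0 < t" "t \<le> T" and t0: "t0 \<in> {0..T}" and \<alpha>: "\<alpha> < 1" and \<gamma>: "0 \<le> \<gamma>"
  shows "caputo_defined \<alpha> (gaussian_barrier \<gamma> xc t0) x t"
    and "caputo \<alpha> (gaussian_barrier \<gamma> xc t0) x t
           \<le> 2 * \<gamma> * T * exp (- \<gamma> * norm (x - xc)^2) * T powr (1 - \<alpha>) / ((1 - \<alpha>) * Gamma (1 - \<alpha>))"
proof -
  define g' where "g' = (\<lambda>\<tau>. - 2 * \<gamma> * (\<tau> - t0) * gaussian_barrier \<gamma> xc t0 (x, \<tau>))"
  define B where "B = 2 * \<gamma> * T * exp (- \<gamma> * norm (x - xc)^2)"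
  have deriv: "deriv (\<lambda>s. gaussian_barrier \<gamma> xc t0 (x, s)) = g'"
    unfolding g'_def by (rule ext) (rule DERIV_imp_deriv[OF gaussian_barrier_time_deriv])
  have g'_cont: "continuous_on {0..t} g'"
    unfolding g'_def gaussian_barrier_def by (intro continuous_intros)
  have g'_bound: "\<bar>g' \<tau>\<bar> \<le> B" if "\<tau> \<in> {0..t}" for \<tau>
    unfolding g'_def B_def using that t t0 \<gamma> by (intro gaussian_barrier_time_deriv_bound) auto
  note singular = weakly_singular_integral[OF t(1) \<alpha> g'_cont g'_bound]
  show "caputo_defined \<alpha> (gaussian_barrier \<gamma> xc t0) x t"
    unfolding caputo_defined_def deriv real_differentiable_def
    using singular(1) gaussian_barrier_time_deriv by blast
  have "integral {0..t} (\<lambda>\<tau>. g' \<tau> / (t - \<tau>) powr \<alpha>) \<le> B * t powr (1 - \<alpha>) / (1 - \<alpha>)"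
    using singular(2) by (simp add: abs_le_iff)
  also have "\<dots> \<le> B * T powr (1 - \<alpha>) / (1 - \<alpha>)"
    using t \<alpha> \<gamma> by (auto simp: B_def intro!: divide_right_mono mult_left_mono powr_mono2)
  finally have "integral {0..t} (\<lambda>\<tau>. g' \<tau> / (t - \<tau>) powr \<alpha>) / Gamma (1 - \<alpha>)
      \<le> B * T powr (1 - \<alpha>) / (1 - \<alpha>) / Gamma (1 - \<alpha>)"
    using \<alpha> Gamma_real_pos[of "1 - \<alpha>"] by (intro divide_right_mono) auto
  then show "caputo \<alpha> (gaussian_barrier \<gamma> xc t0) x t
      \<le> 2 * \<gamma> * T * exp (- \<gamma> * norm (x - xc)^2) * T powr (1 - \<alpha>) / ((1 - \<alpha>) * Gamma (1 - \<alpha>))"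
    by (simp add: caputo_def deriv B_def divide_divide_eq_left)
qed

lemma L_alpha_gaussian_barrier:
  fixes x xc :: "'a::euclidean_space"
  assumes t: "0 < t" "t \<le> T" and t0: "t0 \<in> {0..T}" and \<alpha>: "0 < \<alpha>" "\<alpha> < 1" and \<gamma>: "0 < \<gamma>"
    and near: "\<gamma> * (t - t0)^2 \<le> ln 2"
    and far: "2 * T * T powr (1 - \<alpha>) / ((1 - \<alpha>) * Gamma (1 - \<alpha>)) + DIM('a) + 1 \<le> 2 * \<gamma> * norm (x - xc)^2"
  shows "L_alpha_defined \<alpha> (gaussian_barrier \<gamma> xc t0) x t"
    and "L_alpha \<alpha> (gaussian_barrier \<gamma> xc t0) x t < 0"
proof -
  define K where "K = 2 * T * T powr (1 - \<alpha>) / ((1 - \<alpha>) * Gamma (1 - \<alpha>))"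
  define E where "E = exp (- \<gamma> * norm (x - xc)^2)"
  have K: "0 \<le> K"
    using t \<alpha> Gamma_real_pos[of "1 - \<alpha>"] by (simp add: K_def)
  note caputo = caputo_gaussian_barrier[OF t t0 \<alpha>(2) less_imp_le[OF \<gamma>], of xc x]
  note laplacian = laplacian_gaussian_barrier[of \<gamma> xc t0 t x]
  show "L_alpha_defined \<alpha> (gaussian_barrier \<gamma> xc t0) x t"
    using caputo(1) laplacian(1) by (simp add: L_alpha_defined_def)
  have "caputo \<alpha> (gaussian_barrier \<gamma> xc t0) x t \<le> \<gamma> * K * E"
    using caputo(2) by (simp add: K_def E_def field_simps)
  moreover have "\<gamma> * (K + 1) * E \<le> laplacian (\<lambda>y. gaussian_barrier \<gamma> xc t0 (y, t)) x"
  proof -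
    have "exp (- ln 2) \<le> exp (- \<gamma> * (t - t0)^2)"
      using near by simp
    then have half: "1 / 2 \<le> exp (- \<gamma> * (t - t0)^2)"
      by (simp add: exp_minus)
    have "2 * \<gamma> * (K + DIM('a) + 1) \<le> 2 * \<gamma> * (2 * \<gamma> * norm (x - xc)^2)"
      using far \<gamma> by (intro mult_left_mono) (auto simp: K_def)
    then have coeff: "2 * \<gamma> * (K + 1) \<le> 4 * \<gamma>^2 * norm (x - xc)^2 - 2 * \<gamma> * DIM('a)"
      by (simp add: power2_eq_square algebra_simps)
    moreover have "0 \<le> 2 * \<gamma> * (K + 1)"
      using \<gamma> K by simp
    ultimately have coeff_nonneg: "0 \<le> 4 * \<gamma>^2 * norm (x - xc)^2 - 2 * \<gamma> * DIM('a)"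
      by linarith
    have "\<gamma> * (K + 1) * E = (2 * \<gamma> * (K + 1)) * (1 / 2) * E"
      by simp
    also have "\<dots> \<le> (4 * \<gamma>^2 * norm (x - xc)^2 - 2 * \<gamma> * DIM('a)) * exp (- \<gamma> * (t - t0)^2) * E"
      using coeff coeff_nonneg half \<gamma> K by (intro mult_right_mono mult_mono) (auto simp: E_def)
    also have "\<dots> = laplacian (\<lambda>y. gaussian_barrier \<gamma> xc t0 (y, t)) x"
      unfolding laplacian(2) by (simp add: gaussian_barrier_def E_def mult_exp_exp algebra_simps)
    finally show ?thesis .
  qed
  moreover have "0 < \<gamma> * E"
    using \<gamma> by (simp add: E_def)
  ultimately show "L_alpha \<alpha> (gaussian_barrier \<gamma> xc t0) x t < 0"
    by (simp add: L_alpha_def algebra_simps)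
qed

lemma gaussian_barrier_subsolution_near:
  fixes x0 xc :: "'a::euclidean_space" and T \<alpha> \<rho> :: real
  assumes T: "0 < T" and t0: "t0 \<in> {0..T}" and \<alpha>: "0 < \<alpha>" "\<alpha> < 1"
    and \<rho>: "0 < \<rho>" "dist x0 xc = \<rho>"
  obtains \<gamma> \<delta> where "0 < \<gamma>" "0 < \<delta>"
    "\<And>x t. 0 < t \<Longrightarrow> t \<le> T \<Longrightarrow> dist (x, t) (x0, t0) < \<delta> \<Longrightarrow>
       L_alpha_defined \<alpha> (gaussian_barrier \<gamma> xc t0) x t \<and> L_alpha \<alpha> (gaussian_barrier \<gamma> xc t0) x t < 0"
proof -
  \<comment> \<open>K bounds the Caputo derivative of the barrier; with this gamma its Laplacian wins once
    x is rho/2 away from xc, and delta keeps exp (- gamma (t - t0)^2) above 1/2\<close>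
  define K where "K = 2 * T * T powr (1 - \<alpha>) / ((1 - \<alpha>) * Gamma (1 - \<alpha>))"
  define \<gamma> where "\<gamma> = 2 * (K + DIM('a) + 1) / \<rho>^2"
  define \<delta> where "\<delta> = min (\<rho> / 2) (sqrt (ln 2 / \<gamma>))"
  have "0 \<le> K"
    using T \<alpha> Gamma_real_pos[of "1 - \<alpha>"] by (simp add: K_def)
  then have \<gamma>: "0 < \<gamma>" "\<gamma> * \<rho>^2 = 2 * (K + DIM('a) + 1)"
    using \<rho>(1) by (simp_all add: \<gamma>_def)
  have \<delta>: "0 < \<delta>" "\<delta> \<le> \<rho> / 2" "\<delta>^2 \<le> ln 2 / \<gamma>"
    using \<rho>(1) \<gamma>(1) power_mono[of \<delta> "sqrt (ln 2 / \<gamma>)" 2] by (auto simp: \<delta>_def)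
  have "L_alpha_defined \<alpha> (gaussian_barrier \<gamma> xc t0) x t \<and> L_alpha \<alpha> (gaussian_barrier \<gamma> xc t0) x t < 0"
    if t: "0 < t" "t \<le> T" and near: "dist (x, t) (x0, t0) < \<delta>" for x t
  proof -
    have "norm (x - x0)^2 + (t - t0)^2 < \<delta>^2"
      using near by (simp flip: dist_Pair_sq add: power_strict_mono)
    then have "(t - t0)^2 \<le> \<delta>^2"
      using zero_le_power2[of "norm (x - x0)"] by linarith
    then have "\<gamma> * (t - t0)^2 \<le> \<gamma> * \<delta>^2"
      using \<gamma>(1) by (intro mult_left_mono) auto
    also have "\<dots> \<le> ln 2"
      using \<delta>(3) \<gamma>(1) by (simp add: pos_le_divide_eq mult.commute)
    finally have "\<gamma> * (t - t0)^2 \<le> ln 2" .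
    moreover have "norm (x - x0) < \<rho> / 2"
      using near \<delta>(2) dist_fst_le[of "(x, t)" "(x0, t0)"] by (simp add: dist_norm)
    then have "\<rho> / 2 \<le> norm (x - xc)"
      using norm_triangle_ineq[of "x0 - x" "x - xc"] \<rho>(2) by (simp add: dist_norm norm_minus_commute)
    then have "\<gamma> * (\<rho> / 2)^2 \<le> \<gamma> * norm (x - xc)^2"
      using \<gamma>(1) \<rho>(1) by (intro mult_left_mono power_mono) auto
    then have "K + DIM('a) + 1 \<le> 2 * \<gamma> * norm (x - xc)^2"
      using \<gamma>(2) by (simp add: power_divide)
    ultimately show ?thesis
      using L_alpha_gaussian_barrier[OF t t0 \<alpha> \<gamma>(1), where x = x and xc = xc] by (simp add: K_def)
  qed
  then show ?thesis
    using that \<gamma>(1) \<delta>(1) by blast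
qed

section \<open>Interior balls and the outward normal\<close>

lemma outward_normal_norm:
  "outward_normal \<Omega> p \<nu> \<Longrightarrow> norm \<nu> = 1"
  by (auto simp: outward_normal_def)

lemma has_real_derivative_along_line:
  assumes "(\<phi> has_derivative (\<lambda>v. g \<bullet> v)) (at p)"
  shows "((\<lambda>h. \<phi> (p + h *\<^sub>R w)) has_real_derivative g \<bullet> w) (at 0)"
proof -
  have line: "((\<lambda>h. p + h *\<^sub>R w) has_derivative (\<lambda>h. h *\<^sub>R w)) (at 0)"
    by (auto intro!: derivative_eq_intros)
  have "(\<phi> has_derivative (\<lambda>v. g \<bullet> v)) (at (p + 0 *\<^sub>R w))"
    using assms by simp
  from has_derivative_compose[OF line this]
  have "((\<lambda>h. \<phi> (p + h *\<^sub>R w)) has_derivative (\<lambda>h. g \<bullet> (h *\<^sub>R w))) (at 0)" .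
  moreover have "(\<lambda>h. g \<bullet> (h *\<^sub>R w)) = (*) (g \<bullet> w)"
    by (auto simp: fun_eq_iff)
  ultimately show ?thesis
    unfolding has_field_derivative_def by simp
qed

lemma defining_fun_gradient_inner_nonpos:
  fixes \<Omega> :: "'a::euclidean_space set"
  assumes defined: "local_defining_fun \<Omega> p U \<phi>" and p: "p \<notin> \<Omega>"
    and grad: "(\<phi> has_derivative (\<lambda>v. g \<bullet> v)) (at p)"
    and inward: "\<forall>\<^sub>F h in at_right 0. p + h *\<^sub>R w \<in> \<Omega>"
  shows "g \<bullet> w \<le> 0"
proof (rule ccontr)
  assume "\<not> g \<bullet> w \<le> 0"
  have U: "open U" "p \<in> U" and \<Omega>U: "\<Omega> \<inter> U = {y\<in>U. \<phi> y < 0}"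
    using defined unfolding local_defining_fun_def by blast+
  have "0 \<le> \<phi> p"
  proof (rule ccontr)
    assume "\<not> 0 \<le> \<phi> p"
    then have "p \<in> {y\<in>U. \<phi> y < 0}"
      using U(2) by simp
    then show False
      using p by (simp flip: \<Omega>U)
  qed
  from DERIV_pos_inc_right[OF has_real_derivative_along_line[OF grad, where w = w]] \<open>\<not> g \<bullet> w \<le> 0\<close>
  obtain d where "0 < d" and increasing: "\<And>h. 0 < h \<Longrightarrow> h < d \<Longrightarrow> \<phi> p < \<phi> (p + h *\<^sub>R w)"
    by auto
  have "((\<lambda>h. p + h *\<^sub>R w) \<longlongrightarrow> p) (at_right 0)"
    by (auto intro!: tendsto_eq_intros)
  then have near_U: "\<forall>\<^sub>F h in at_right 0. p + h *\<^sub>R w \<in> U"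
    using U by (rule topological_tendstoD)
  have small: "\<forall>\<^sub>F h::real in at_right 0. 0 < h \<and> h < d"
    using \<open>0 < d\<close> by (auto intro!: eventually_at_rightI[of 0 d])
  from eventually_conj[OF near_U eventually_conj[OF small inward]]
  obtain h where h: "p + h *\<^sub>R w \<in> \<Omega> \<inter> U" "0 < h" "h < d"
    using eventually_happens'[OF trivial_limit_at_right_real] by blast
  then have "\<phi> (p + h *\<^sub>R w) < 0"
    by (simp add: \<Omega>U)
  then show False
    using increasing[OF h(2,3)] \<open>0 \<le> \<phi> p\<close> by simp
qed

lemma eventually_in_ball_inward:
  fixes p c w :: "'a::real_inner"
  assumes inward: "w \<bullet> (p - c) < 0"
  shows "\<forall>\<^sub>F h in at_right 0. p + h *\<^sub>R w \<in> ball c (dist p c)"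
proof -
  have ww: "0 < w \<bullet> w"
    using inward by (metis inner_eq_zero_iff inner_gt_zero_iff inner_zero_left less_irrefl)
  have "0 < - (w \<bullet> (p - c)) / (w \<bullet> w)"
    using inward ww by (simp add: divide_neg_pos)
  then have "\<forall>\<^sub>F h in at_right 0. 0 < h \<and> h < - (w \<bullet> (p - c)) / (w \<bullet> w)"
    by (auto intro!: eventually_at_rightI)
  then show ?thesis
  proof eventually_elim
    case (elim h)
    then have "h * (w \<bullet> w) < - (w \<bullet> (p - c))"
      using ww by (metis minus_divide_left pos_less_divide_eq)
    then have "h * (h * (w \<bullet> w)) < h * - (w \<bullet> (p - c))"
      using elim by (intro mult_strict_left_mono) auto
    moreover have "h * (w \<bullet> (p - c)) < 0"
      using elim inward by (simp add: mult_pos_neg)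
    moreover have "norm (p + h *\<^sub>R w - c)^2 = norm (p - c)^2 + 2 * h * (w \<bullet> (p - c)) + h^2 * (w \<bullet> w)"
      unfolding power2_norm_eq_inner
      by (simp add: algebra_simps inner_add_left inner_add_right inner_diff_left inner_diff_right
          inner_commute power2_eq_square)
    ultimately have "norm (p + h *\<^sub>R w - c)^2 < norm (p - c)^2"
      by (simp add: power2_eq_square algebra_simps)
    then show ?case
      by (simp add: dist_norm norm_minus_commute power2_less_imp_less)
  qed
qed

lemma outward_normal_inner_pos:
  fixes \<Omega> :: "'a::euclidean_space set"
  assumes "open \<Omega>" "x0 \<in> frontier \<Omega>" "x0 \<noteq> xb"
    and ball: "ball xb (dist x0 xb) \<subseteq> \<Omega>" and \<nu>: "outward_normal \<Omega> x0 \<nu>"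
  shows "0 < \<nu> \<bullet> (x0 - xb)"
proof -
  obtain U \<phi> g where defined: "local_defining_fun \<Omega> x0 U \<phi>" and "g \<noteq> 0"
    and grad: "(\<phi> has_derivative (\<lambda>v. g \<bullet> v)) (at x0)" and \<nu>_eq: "\<nu> = g /\<^sub>R norm g"
    using \<nu> unfolding outward_normal_def by blast
  have "x0 \<notin> \<Omega>"
    using assms(1,2) by (simp add: frontier_def interior_open)
  have "0 < g \<bullet> (x0 - xb)"
  proof (rule ccontr)
    assume "\<not> 0 < g \<bullet> (x0 - xb)"
    \<comment> \<open>this direction enters the ball, yet increases the defining function\<close>
    define w where "w = g - (x0 - xb)"
    have "0 < (x0 - xb) \<bullet> (x0 - xb)"
      using assms(3) by simp
    then have "w \<bullet> (x0 - xb) < 0"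
      using \<open>\<not> 0 < g \<bullet> (x0 - xb)\<close> by (simp add: w_def inner_diff_left)
    then have "\<forall>\<^sub>F h in at_right 0. x0 + h *\<^sub>R w \<in> \<Omega>"
      by (rule eventually_mono[OF eventually_in_ball_inward]) (use ball in blast)
    then have "g \<bullet> w \<le> 0"
      by (rule defining_fun_gradient_inner_nonpos[OF defined \<open>x0 \<notin> \<Omega>\<close> grad])
    moreover have "0 < g \<bullet> g"
      using \<open>g \<noteq> 0\<close> by simp
    moreover have "g \<bullet> w = g \<bullet> g - g \<bullet> (x0 - xb)"
      by (simp add: w_def inner_diff_right)
    ultimately show False
      using \<open>\<not> 0 < g \<bullet> (x0 - xb)\<close> by linarith
  qed
  then show ?thesis
    using \<open>g \<noteq> 0\<close> by (simp add: \<nu>_eq)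
qed

lemma cball_tangent_subset_ball:
  fixes p c :: "'a::real_inner"
  assumes l: "0 < l" "l < 1"
  shows "cball (p - l *\<^sub>R (p - c)) (l * dist p c) - {p} \<subseteq> ball c (dist p c)"
proof
  fix z
  assume z: "z \<in> cball (p - l *\<^sub>R (p - c)) (l * dist p c) - {p}"
  define R where "R = dist p c"
  have "norm (z - (p - l *\<^sub>R (p - c)))^2
      = (1 - l) * norm (z - p)^2 + l * norm (z - c)^2 - l * (1 - l) * R^2"
    unfolding power2_norm_eq_inner R_def dist_norm
    by (simp add: inner_diff_left inner_diff_right inner_add_left inner_add_right inner_commute algebra_simps)
  moreover have "norm (z - (p - l *\<^sub>R (p - c)))^2 \<le> (l * R)^2"
    using z l by (auto simp: R_def dist_norm norm_minus_commute intro!: power_mono)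
  moreover have "0 < (1 - l) * norm (z - p)^2"
    using z l by auto
  ultimately have "l * norm (z - c)^2 < l * R^2"
    by (simp add: power2_eq_square algebra_simps)
  then have "norm (z - c)^2 < R^2"
    using l by simp
  then show "z \<in> ball c (dist p c)"
    by (simp add: R_def dist_norm norm_minus_commute power2_less_imp_less)
qed

lemma interior_sphere_property_balls:
  assumes "interior_sphere_property D x0 t0"
  obtains xb where "xb \<noteq> x0"
    "cball (xb, t0) (dist x0 xb) \<subseteq> closure D" "ball (xb, t0) (dist x0 xb) \<subseteq> D"
proof -
  obtain xb where "xb \<noteq> x0"
    and closed_ball: "{(x, t). norm (x - xb)^2 + (t - t0)^2 \<le> (dist x0 xb)^2} \<subseteq> closure D"
    and open_ball: "{(x, t). norm (x - xb)^2 + (t - t0)^2 < (dist x0 xb)^2} \<subseteq> D"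
    using assms unfolding interior_sphere_property_def dist_norm by blast
  have sq: "dist (xb, t0) (x, t)^2 = norm (x - xb)^2 + (t - t0)^2" for x t
    by (simp add: dist_Pair_sq norm_minus_commute power2_commute)
  have le: "dist (xb, t0) (x, t) \<le> dist x0 xb \<longleftrightarrow> norm (x - xb)^2 + (t - t0)^2 \<le> (dist x0 xb)^2"
    and less: "dist (xb, t0) (x, t) < dist x0 xb \<longleftrightarrow> norm (x - xb)^2 + (t - t0)^2 < (dist x0 xb)^2" for x t
    using abs_le_square_iff[of "dist (xb, t0) (x, t)" "dist x0 xb"]
      abs_le_square_iff[of "dist x0 xb" "dist (xb, t0) (x, t)"]
    unfolding sq by auto
  have "cball (xb, t0) (dist x0 xb) \<subseteq> closure D"
    using closed_ball le by (auto simp: mem_cball)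
  moreover have "ball (xb, t0) (dist x0 xb) \<subseteq> D"
    using open_ball less by (auto simp: mem_ball)
  ultimately show ?thesis
    using \<open>xb \<noteq> x0\<close> that by blast
qed

lemma shrunken_tangent_ball:
  fixes p c :: "'a::real_inner"
  assumes "p \<noteq> c" and big: "cball c (dist p c) \<subseteq> closure D" "ball c (dist p c) \<subseteq> D"
    and V: "open V" "p \<in> V"
  obtains l where "0 < l" "l < 1"
    "cball (p - l *\<^sub>R (p - c)) (l * dist p c) \<subseteq> closure D"
    "cball (p - l *\<^sub>R (p - c)) (l * dist p c) - {p} \<subseteq> interior D \<inter> V"
proof -
  define R where "R = dist p c"
  have R: "0 < R"
    using \<open>p \<noteq> c\<close> by (simp add: R_def)
  obtain r where r: "0 < r" "ball p r \<subseteq> V"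
    using V open_contains_ball by blast
  define l where "l = min (1 / 2) (r / (3 * R))"
  have l: "0 < l" "l < 1" "l * R \<le> r / 3"
    using R r by (auto simp: l_def min_def field_simps)
  define B where "B = cball (p - l *\<^sub>R (p - c)) (l * R)"
  have "B - {p} \<subseteq> ball c R"
    using cball_tangent_subset_ball[OF l(1,2)] by (simp add: B_def R_def)
  moreover have "ball c R \<subseteq> interior D"
    using big(2) by (simp add: R_def interior_maximal)
  moreover have "B \<subseteq> ball p r"
  proof
    fix z
    assume "z \<in> B"
    then have "dist p z \<le> 2 * (l * R)"
      using dist_triangle[of p z "p - l *\<^sub>R (p - c)"] l(1)
      by (simp add: B_def R_def dist_norm)
    then show "z \<in> ball p r"
      using l(3) r(1) by simp
  qed
  ultimately have inside: "B - {p} \<subseteq> interior D \<inter> V"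
    using r(2) by blast
  have "p \<in> cball c (dist p c)"
    by (simp add: dist_commute)
  then have "p \<in> closure D"
    using big(1) by blast
  then have "B \<subseteq> closure D"
    using inside interior_subset closure_subset by blast
  then show ?thesis
    using that[OF l(1,2)] inside by (simp add: B_def R_def)
qed

lemma Omega_T_tangent_ball:
  fixes \<Omega> :: "'a::euclidean_space set"
  assumes \<Omega>: "open \<Omega>" and x0: "x0 \<in> frontier \<Omega>"
    and sphere: "interior_sphere_property (Omega_T \<Omega> T) x0 t0"
    and \<nu>: "outward_normal \<Omega> x0 \<nu>" and V: "open V" "(x0, t0) \<in> V"
  obtains xc \<rho> where "0 < \<rho>" "dist x0 xc = \<rho>" "0 < \<nu> \<bullet> (x0 - xc)"
    "cball (xc, t0) \<rho> \<subseteq> closure (Omega_T \<Omega> T)"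
    "cball (xc, t0) \<rho> - {(x0, t0)} \<subseteq> interior (Omega_T \<Omega> T) \<inter> V"
proof -
  obtain xb where "xb \<noteq> x0" and big_cball: "cball (xb, t0) (dist x0 xb) \<subseteq> closure (Omega_T \<Omega> T)"
    and big_ball: "ball (xb, t0) (dist x0 xb) \<subseteq> Omega_T \<Omega> T"
    using interior_sphere_property_balls[OF sphere] by blast
  have "ball xb (dist x0 xb) \<subseteq> \<Omega>"
  proof
    fix y
    assume "y \<in> ball xb (dist x0 xb)"
    then have "(y, t0) \<in> ball (xb, t0) (dist x0 xb)"
      by (simp add: dist_Pair_Pair)
    then show "y \<in> \<Omega>"
      using big_ball by (auto simp: Omega_T_def)
  qed
  then have normal: "0 < \<nu> \<bullet> (x0 - xb)"
    using outward_normal_inner_pos[OF \<Omega> x0 _ _ \<nu>] \<open>xb \<noteq> x0\<close> by simp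
  have dist_eq: "dist (x0, t0) (xb, t0) = dist x0 xb"
    by (simp add: dist_Pair_Pair)
  obtain l where l: "0 < l" "l < 1"
    and small: "cball ((x0, t0) - l *\<^sub>R ((x0, t0) - (xb, t0))) (l * dist x0 xb) \<subseteq> closure (Omega_T \<Omega> T)"
      "cball ((x0, t0) - l *\<^sub>R ((x0, t0) - (xb, t0))) (l * dist x0 xb) - {(x0, t0)}
         \<subseteq> interior (Omega_T \<Omega> T) \<inter> V"
    using shrunken_tangent_ball[of "(x0, t0)" "(xb, t0)" "Omega_T \<Omega> T" V] \<open>xb \<noteq> x0\<close>
      big_cball big_ball V unfolding dist_eq by blast
  show ?thesis
  proof (rule that[of "l * dist x0 xb" "x0 - l *\<^sub>R (x0 - xb)"])
    show "0 < l * dist x0 xb" "dist x0 (x0 - l *\<^sub>R (x0 - xb)) = l * dist x0 xb"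
      using l(1) \<open>xb \<noteq> x0\<close> by (simp_all add: dist_norm)
    show "0 < \<nu> \<bullet> (x0 - (x0 - l *\<^sub>R (x0 - xb)))"
      using normal l(1) by simp
  qed (use small in simp_all)
qed

lemma norm_diff_scaleR_unit_sq:
  fixes x0 xc \<nu> :: "'a::real_inner"
  assumes "norm \<nu> = 1"
  shows "norm (x0 - h *\<^sub>R \<nu> - xc)^2 = norm (x0 - xc)^2 - 2 * h * (\<nu> \<bullet> (x0 - xc)) + h^2"
proof -
  have "x0 - h *\<^sub>R \<nu> - xc = (x0 - xc) - h *\<^sub>R \<nu>"
    by (simp add: algebra_simps)
  moreover have "\<nu> \<bullet> \<nu> = 1"
    using assms by (simp add: dot_square_norm)
  ultimately show ?thesis
    unfolding power2_norm_eq_inner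
    by (simp add: inner_diff_left inner_diff_right inner_commute power2_eq_square algebra_simps)
qed

section \<open>The barrier argument\<close>

lemma compact_uniform_gap:
  fixes f :: "'a::topological_space \<Rightarrow> real"
  assumes "compact C" "continuous_on C f" "\<And>p. p \<in> C \<Longrightarrow> f p < M"
  obtains \<eta> where "0 < \<eta>" "\<And>p. p \<in> C \<Longrightarrow> f p \<le> M - \<eta>"
proof (cases "C = {}")
  case False
  then obtain q where "q \<in> C" "\<And>p. p \<in> C \<Longrightarrow> f p \<le> f q"
    using continuous_attains_sup[OF assms(1) _ assms(2)] by blast
  then show ?thesis
    using that[of "M - f q"] assms(3) by force
qed (use that[of 1] in simp)

lemma positive_max_attained_inside:
  fixes f :: "'a::topological_space \<Rightarrow> real"
  assumes K: "compact K" "D \<subseteq> K" "K \<subseteq> S" and f: "continuous_on S f"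
    and outside: "\<And>q. q \<in> S - D \<Longrightarrow> f q \<le> 0" and p: "p \<in> S" "0 < f p"
  obtains P where "P \<in> D" "\<And>q. q \<in> S \<Longrightarrow> f q \<le> f P"
proof -
  have "p \<in> K"
    using p outside K(2) by force
  then obtain P where P: "P \<in> K" "\<And>q. q \<in> K \<Longrightarrow> f q \<le> f P"
    using continuous_attains_sup[OF K(1) _ continuous_on_subset[OF f K(3)]] by blast
  then have "0 < f P"
    using p \<open>p \<in> K\<close> by force
  then have "P \<in> D"
    using outside P(1) K(3) by force
  moreover have "f q \<le> f P" if "q \<in> S" for q
    using that P(2) K(2) outside[of q] \<open>0 < f P\<close> by (cases "q \<in> D") auto
  ultimately show ?thesis
    using that by blast
qed

lemma L_alpha_add_strict_subsolution:
  assumes Ldef: "\<forall>(x, t)\<in>Omega_T \<Omega> T. L_alpha_defined \<alpha> u x t"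
    and sub: "\<forall>(x, t)\<in>Omega_T \<Omega> T. L_alpha \<alpha> u x t \<le> 0"
    and x: "x \<in> \<Omega>" and t: "0 < t" "t < T"
    and v: "L_alpha_defined \<alpha> v x t" "L_alpha \<alpha> v x t < 0" "(\<lambda>s. v (x, s)) differentiable (at t)"
    and \<epsilon>: "0 < \<epsilon>"
  shows "L_alpha_defined \<alpha> (\<lambda>p. u p + \<epsilon> * v p + c) x t
    \<and> (\<lambda>s. u (x, s) + \<epsilon> * v (x, s) + c) differentiable (at t)
    \<and> L_alpha \<alpha> (\<lambda>p. u p + \<epsilon> * v p + c) x t < 0"
proof (intro conjI)
  have u: "L_alpha_defined \<alpha> u x t" "L_alpha \<alpha> u x t \<le> 0"
    using Ldef sub x t by (auto simp: Omega_T_def)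
  have eq: "(\<lambda>p. u p + \<epsilon> * v p + c) = (\<lambda>p. 1 * u p + \<epsilon> * v p + c)"
    by simp
  show "L_alpha_defined \<alpha> (\<lambda>p. u p + \<epsilon> * v p + c) x t"
    unfolding eq by (rule L_alpha_lincomb(1)[OF u(1) v(1)])
  \<comment> \<open>caputo_defined at t gives differentiability only on (0, t); at t itself it comes from time T\<close>
  have "L_alpha_defined \<alpha> u x T"
    using Ldef x t by (auto simp: Omega_T_def)
  then have "(\<lambda>s. u (x, s)) differentiable (at t)"
    using t by (simp add: L_alpha_defined_def caputo_defined_def)
  then show "(\<lambda>s. u (x, s) + \<epsilon> * v (x, s) + c) differentiable (at t)"
    using v(3) by (intro differentiable_add differentiable_mult differentiable_const)
  have "\<epsilon> * L_alpha \<alpha> v x t < 0"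
    using v(2) \<epsilon> by (simp add: mult_pos_neg)
  then show "L_alpha \<alpha> (\<lambda>p. u p + \<epsilon> * v p + c) x t < 0"
    unfolding eq L_alpha_lincomb(2)[OF u(1) v(1)] using u(2) by simp
qed

lemma strict_subsolution_nonpos:
  fixes w :: "'a::euclidean_space \<times> real \<Rightarrow> real"
  assumes \<Omega>: "open \<Omega>" and \<alpha>: "0 < \<alpha>" "\<alpha> < 1"
    and cont: "continuous_on (closure (Omega_T \<Omega> T)) w"
    and K: "compact K" "D \<subseteq> K" "K \<subseteq> closure (Omega_T \<Omega> T)" and D: "D \<subseteq> interior (Omega_T \<Omega> T)"
    and outside: "\<And>q. q \<in> closure (Omega_T \<Omega> T) - D \<Longrightarrow> w q \<le> 0"
    and sub: "\<And>x t. (x, t) \<in> D \<Longrightarrow>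
      L_alpha_defined \<alpha> w x t \<and> (\<lambda>s. w (x, s)) differentiable (at t) \<and> L_alpha \<alpha> w x t < 0"
    and p: "p \<in> closure (Omega_T \<Omega> T)"
  shows "w p \<le> 0"
proof (rule ccontr)
  assume "\<not> w p \<le> 0"
  then obtain x t where P: "(x, t) \<in> D" "\<And>q. q \<in> closure (Omega_T \<Omega> T) \<Longrightarrow> w q \<le> w (x, t)"
    using positive_max_attained_inside[OF K cont outside p] by (metis not_le surj_pair)
  then have "x \<in> \<Omega>" "0 < t" "t < T"
    using D \<Omega> by (auto simp: interior_Omega_T)
  then have "0 \<le> L_alpha \<alpha> w x t"
    using L_alpha_nonneg_at_max[OF \<Omega> _ _ _ \<alpha> cont P(2)] sub[OF P(1)] by simp
  then show False
    using sub[OF P(1)] by simp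
qed

lemma add_gaussian_barrier_le:
  assumes "0 \<le> \<gamma>" "0 \<le> \<epsilon>" "0 \<le> \<rho>" "u q \<le> M" "q \<in> ball (xc, t0) \<rho> \<Longrightarrow> u q \<le> M - \<epsilon>"
  shows "u q + \<epsilon> * (gaussian_barrier \<gamma> xc t0 q - exp (- \<gamma> * \<rho>^2)) \<le> M"
proof (cases "q \<in> ball (xc, t0) \<rho>")
  case True
  have "gaussian_barrier \<gamma> xc t0 q - exp (- \<gamma> * \<rho>^2) \<le> 1"
    using gaussian_barrier_le_1[OF assms(1), of xc t0 q] exp_gt_zero[of "- \<gamma> * \<rho>^2"] by linarith
  then have "\<epsilon> * (gaussian_barrier \<gamma> xc t0 q - exp (- \<gamma> * \<rho>^2)) \<le> \<epsilon> * 1"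
    using assms(2) by (rule mult_left_mono)
  then show ?thesis
    using assms(5)[OF True] by simp
next
  case False
  then have "- \<gamma> * dist q (xc, t0)^2 \<le> - \<gamma> * \<rho>^2"
    using assms(1,3) by (auto simp: dist_commute intro!: mult_left_mono power_mono)
  then have "gaussian_barrier \<gamma> xc t0 q \<le> exp (- \<gamma> * \<rho>^2)"
    by (simp add: gaussian_barrier_dist)
  then have "\<epsilon> * (gaussian_barrier \<gamma> xc t0 q - exp (- \<gamma> * \<rho>^2)) \<le> 0"
    using assms(2) by (simp add: mult_nonneg_nonpos)
  then show ?thesis
    using assms(4) by simp
qed

lemma hopf_barrier_comparison:
  fixes \<Omega> :: "'a::euclidean_space set" and u :: "'a \<times> real \<Rightarrow> real"
  assumes \<Omega>: "open \<Omega>" and T: "0 < T" and \<alpha>: "0 < \<alpha>" "\<alpha> < 1"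
    and cont: "continuous_on (closure (Omega_T \<Omega> T)) u"
    and Ldef: "\<forall>(x, t)\<in>Omega_T \<Omega> T. L_alpha_defined \<alpha> u x t"
    and sub: "\<forall>(x, t)\<in>Omega_T \<Omega> T. L_alpha \<alpha> u x t \<le> 0"
    and t0: "t0 \<in> {0<..T}" and \<rho>: "0 < \<rho>" "dist x0 xc = \<rho>"
    and ball_closure: "cball (xc, t0) \<rho> \<subseteq> closure (Omega_T \<Omega> T)"
    and ball_interior: "cball (xc, t0) \<rho> - {(x0, t0)} \<subseteq> interior (Omega_T \<Omega> T)"
    and max: "\<forall>p\<in>closure (Omega_T \<Omega> T). u p \<le> u (x0, t0)"
    and strict: "\<forall>p\<in>cball (xc, t0) \<rho> - {(x0, t0)}. u p < u (x0, t0)"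
  obtains \<epsilon> \<gamma> where "0 < \<epsilon>" "0 < \<gamma>"
    "\<And>p. p \<in> closure (Omega_T \<Omega> T) \<Longrightarrow>
       u p + \<epsilon> * (gaussian_barrier \<gamma> xc t0 p - exp (- \<gamma> * \<rho>^2)) \<le> u (x0, t0)"
proof -
  define M where "M = u (x0, t0)"
  have t0': "t0 \<in> {0..T}"
    using t0 by simp
  obtain \<gamma> \<delta> where \<gamma>: "0 < \<gamma>" and \<delta>: "0 < \<delta>" and barrier: "\<And>x t. 0 < t \<Longrightarrow> t \<le> T \<Longrightarrow>
      dist (x, t) (x0, t0) < \<delta> \<Longrightarrow>
      L_alpha_defined \<alpha> (gaussian_barrier \<gamma> xc t0) x t \<and> L_alpha \<alpha> (gaussian_barrier \<gamma> xc t0) x t < 0"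
    using gaussian_barrier_subsolution_near[OF T t0' \<alpha> \<rho>] by blast
  define C where "C = cball (xc, t0) \<rho> - ball (x0, t0) \<delta>"
  have C: "C \<subseteq> cball (xc, t0) \<rho> - {(x0, t0)}"
    using \<delta> by (auto simp: C_def)
  have "compact C"
    unfolding C_def by (intro compact_diff compact_cball open_ball)
  moreover have "continuous_on C u"
    using C ball_closure by (blast intro: continuous_on_subset[OF cont])
  ultimately obtain \<epsilon> where \<epsilon>: "0 < \<epsilon>" "\<And>p. p \<in> C \<Longrightarrow> u p \<le> M - \<epsilon>"
    using compact_uniform_gap[of C u M] strict C unfolding M_def by blast
  define w where "w = (\<lambda>p. u p + \<epsilon> * gaussian_barrier \<gamma> xc t0 p + (- \<epsilon> * exp (- \<gamma> * \<rho>^2) - M))"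
  have w_eq: "w p = u p + \<epsilon> * (gaussian_barrier \<gamma> xc t0 p - exp (- \<gamma> * \<rho>^2)) - M" for p
    by (simp add: w_def algebra_simps)
  define D where "D = ball (xc, t0) \<rho> \<inter> ball (x0, t0) \<delta>"
  have "w p \<le> 0" if "p \<in> closure (Omega_T \<Omega> T)" for p
  proof (rule strict_subsolution_nonpos[OF \<Omega> \<alpha> _ compact_cball _ ball_closure _ _ _ that])
    show "continuous_on (closure (Omega_T \<Omega> T)) w"
      unfolding w_def using cont by (intro continuous_intros)
    show "D \<subseteq> cball (xc, t0) \<rho>"
      by (auto simp: D_def)
    have "(x0, t0) \<notin> D"
      using \<rho> by (simp add: D_def dist_Pair_Pair dist_commute)
    then show "D \<subseteq> interior (Omega_T \<Omega> T)"
      using ball_interior by (auto simp: D_def)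
    show "w q \<le> 0" if "q \<in> closure (Omega_T \<Omega> T) - D" for q
      unfolding w_eq using add_gaussian_barrier_le[of \<gamma> \<epsilon> \<rho> u q M xc t0] that \<gamma> \<epsilon> \<rho> max
      by (auto simp: M_def D_def C_def)
    fix x t
    assume xt: "(x, t) \<in> D"
    then have "(x, t) \<in> interior (Omega_T \<Omega> T)"
      using \<open>D \<subseteq> interior (Omega_T \<Omega> T)\<close> by blast
    then have x: "x \<in> \<Omega>" and t: "0 < t" "t < T"
      using \<Omega> by (auto simp: interior_Omega_T)
    have "dist (x, t) (x0, t0) < \<delta>"
      using xt by (simp add: D_def dist_commute)
    then have "L_alpha_defined \<alpha> (gaussian_barrier \<gamma> xc t0) x t"
      "L_alpha \<alpha> (gaussian_barrier \<gamma> xc t0) x t < 0"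
      using barrier[of t x] t by auto
    moreover have "(\<lambda>s. gaussian_barrier \<gamma> xc t0 (x, s)) differentiable (at t)"
      using gaussian_barrier_time_deriv real_differentiable_def by blast
    ultimately show "L_alpha_defined \<alpha> w x t \<and> (\<lambda>s. w (x, s)) differentiable (at t) \<and> L_alpha \<alpha> w x t < 0"
      unfolding w_def by (rule L_alpha_add_strict_subsolution[OF Ldef sub x t _ _ _ \<epsilon>(1)])
  qed
  then show ?thesis
    using that[OF \<epsilon>(1) \<gamma>] by (simp add: w_eq M_def)
qed

lemma gaussian_barrier_along_normal_ge:
  fixes x0 xc \<nu> :: "'a::real_inner"
  assumes \<nu>: "norm \<nu> = 1" and \<gamma>: "0 \<le> \<gamma>" and h: "0 \<le> h" "h \<le> \<nu> \<bullet> (x0 - xc)"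
  shows "exp (- \<gamma> * dist x0 xc ^ 2) * (1 + \<gamma> * h * (\<nu> \<bullet> (x0 - xc)))
    \<le> gaussian_barrier \<gamma> xc t0 (x0 - h *\<^sub>R \<nu>, t0)"
proof -
  define \<beta> where "\<beta> = \<nu> \<bullet> (x0 - xc)"
  have "h * h \<le> h * \<beta>"
    using h by (intro mult_left_mono) (auto simp: \<beta>_def)
  then have "\<gamma> * (h * \<beta>) \<le> \<gamma> * (2 * h * \<beta> - h^2)"
    using \<gamma> by (intro mult_left_mono) (auto simp: power2_eq_square mult.commute)
  also have "1 + \<dots> \<le> exp (\<gamma> * (2 * h * \<beta> - h^2))"
    by (rule exp_ge_add_one_self)
  finally have "exp (- \<gamma> * dist x0 xc ^ 2) * (1 + \<gamma> * h * \<beta>)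
      \<le> exp (- \<gamma> * dist x0 xc ^ 2) * exp (\<gamma> * (2 * h * \<beta> - h^2))"
    by (simp add: mult.assoc)
  also have "\<dots> = gaussian_barrier \<gamma> xc t0 (x0 - h *\<^sub>R \<nu>, t0)"
  proof -
    have sq: "norm (x0 - h *\<^sub>R \<nu> - xc)^2 = dist x0 xc ^ 2 - 2 * h * \<beta> + h^2"
      using norm_diff_scaleR_unit_sq[OF \<nu>, of x0 h xc] by (simp add: dist_norm \<beta>_def)
    show ?thesis
      unfolding gaussian_barrier_def fst_conv snd_conv sq by (simp add: mult_exp_exp algebra_simps)
  qed
  finally show ?thesis
    by (simp add: \<beta>_def)
qed

lemma normal_segment_in_cball:
  fixes x0 xc \<nu> :: "'a::real_inner" and t0 :: real
  assumes \<nu>: "norm \<nu> = 1" and h: "0 \<le> h" "h \<le> 2 * (\<nu> \<bullet> (x0 - xc))"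
  shows "(x0 - h *\<^sub>R \<nu>, t0) \<in> cball (xc, t0) (dist x0 xc)"
proof -
  have "dist (xc, t0) (x0 - h *\<^sub>R \<nu>, t0)^2 = norm (x0 - h *\<^sub>R \<nu> - xc)^2"
    using dist_Pair_sq[of xc t0 "x0 - h *\<^sub>R \<nu>" t0] by (simp add: norm_minus_commute)
  also have "\<dots> = dist x0 xc ^ 2 - h * (2 * (\<nu> \<bullet> (x0 - xc)) - h)"
    using norm_diff_scaleR_unit_sq[OF \<nu>, of x0 h xc] by (simp add: dist_norm power2_eq_square algebra_simps)
  also have "\<dots> \<le> dist x0 xc ^ 2"
    using h by simp
  finally have "dist (xc, t0) (x0 - h *\<^sub>R \<nu>, t0) \<le> dist x0 xc"
    by (rule power2_le_imp_le) simp
  then show ?thesis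
    by (simp only: mem_cball)
qed

lemma normal_derivative_pos_of_barrier:
  fixes u :: "'a::euclidean_space \<times> real \<Rightarrow> real"
  assumes \<nu>: "norm \<nu> = 1" and normal: "0 < \<nu> \<bullet> (x0 - xc)" and \<gamma>: "0 < \<gamma>" and \<epsilon>: "0 < \<epsilon>"
    and below: "\<forall>\<^sub>F h in at_right 0. u (x0 - h *\<^sub>R \<nu>, t0)
      + \<epsilon> * (gaussian_barrier \<gamma> xc t0 (x0 - h *\<^sub>R \<nu>, t0) - exp (- \<gamma> * dist x0 xc ^ 2)) \<le> u (x0, t0)"
    and L: "has_normal_derivative u \<nu> x0 t0 L"
  shows "0 < L"
proof -
  define c where "c = \<epsilon> * exp (- \<gamma> * dist x0 xc ^ 2) * \<gamma> * (\<nu> \<bullet> (x0 - xc))"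
  have "\<forall>\<^sub>F h in at_right 0. 0 < h \<and> h < \<nu> \<bullet> (x0 - xc)"
    using normal by (auto intro!: eventually_at_rightI)
  then have "\<forall>\<^sub>F h in at_right 0. c \<le> (u (x0, t0) - u (x0 - h *\<^sub>R \<nu>, t0)) / h"
    using below
  proof eventually_elim
    case (elim h)
    have "c * h = \<epsilon> * (exp (- \<gamma> * dist x0 xc ^ 2) * (1 + \<gamma> * h * (\<nu> \<bullet> (x0 - xc)))
        - exp (- \<gamma> * dist x0 xc ^ 2))"
      by (simp add: c_def algebra_simps)
    also have "\<dots> \<le> \<epsilon> * (gaussian_barrier \<gamma> xc t0 (x0 - h *\<^sub>R \<nu>, t0) - exp (- \<gamma> * dist x0 xc ^ 2))"
      using gaussian_barrier_along_normal_ge[OF \<nu>, of \<gamma> h x0 xc t0] \<gamma> \<epsilon> elim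
      by (intro mult_left_mono) auto
    finally have "c * h \<le> u (x0, t0) - u (x0 - h *\<^sub>R \<nu>, t0)"
      using elim by linarith
    then show ?case
      using elim by (simp add: pos_le_divide_eq)
  qed
  then have "c \<le> L"
    using L unfolding has_normal_derivative_def by (intro tendsto_lowerbound) auto
  moreover have "0 < c"
    using \<epsilon> \<gamma> normal by (simp add: c_def)
  ultimately show ?thesis
    by simp
qed

lemma has_normal_derivative_uminus:
  "has_normal_derivative u \<nu> x0 t0 L \<Longrightarrow> has_normal_derivative (\<lambda>p. - u p) \<nu> x0 t0 (- L)"
  unfolding has_normal_derivative_def
  by (drule tendsto_minus) (simp only: minus_divide_left minus_diff_eq diff_minus_eq_add uminus_add_conv_diff)

lemma hopf_lemma_max:
  fixes \<Omega> :: "'a::euclidean_space set" and u :: "'a \<times> real \<Rightarrow> real"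
  assumes \<Omega>: "open \<Omega>" and T: "0 < T" and \<alpha>: "0 < \<alpha>" "\<alpha> < 1"
    and cont: "continuous_on (closure (Omega_T \<Omega> T)) u"
    and Ldef: "\<forall>(x, t)\<in>Omega_T \<Omega> T. L_alpha_defined \<alpha> u x t"
    and sub: "\<forall>(x, t)\<in>Omega_T \<Omega> T. L_alpha \<alpha> u x t \<le> 0"
    and x0: "x0 \<in> frontier \<Omega>" and t0: "t0 \<in> {0<..T}"
    and sphere: "interior_sphere_property (Omega_T \<Omega> T) x0 t0"
    and \<nu>: "outward_normal \<Omega> x0 \<nu>"
    and max: "\<forall>p\<in>closure (Omega_T \<Omega> T). u p \<le> u (x0, t0)"
    and strict: "\<exists>V. open V \<and> (x0, t0) \<in> V \<and> (\<forall>p\<in>Omega_T \<Omega> T \<inter> V. u p < u (x0, t0))"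
    and L: "has_normal_derivative u \<nu> x0 t0 L"
  shows "0 < L"
proof -
  obtain V where V: "open V" "(x0, t0) \<in> V" "\<forall>p\<in>Omega_T \<Omega> T \<inter> V. u p < u (x0, t0)"
    using strict by blast
  obtain xc \<rho> where \<rho>: "0 < \<rho>" "dist x0 xc = \<rho>" and normal: "0 < \<nu> \<bullet> (x0 - xc)"
    and ball_closure: "cball (xc, t0) \<rho> \<subseteq> closure (Omega_T \<Omega> T)"
    and ball_inside: "cball (xc, t0) \<rho> - {(x0, t0)} \<subseteq> interior (Omega_T \<Omega> T) \<inter> V"
    by (rule Omega_T_tangent_ball[OF \<Omega> x0 sphere \<nu> V(1,2)])
  have ball_interior: "cball (xc, t0) \<rho> - {(x0, t0)} \<subseteq> interior (Omega_T \<Omega> T)"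
    using ball_inside by blast
  have ball_strict: "\<forall>p\<in>cball (xc, t0) \<rho> - {(x0, t0)}. u p < u (x0, t0)"
    using ball_inside V(3) interior_subset by blast
  obtain \<epsilon> \<gamma> where "0 < \<epsilon>" "0 < \<gamma>" and below: "\<And>p. p \<in> closure (Omega_T \<Omega> T) \<Longrightarrow>
      u p + \<epsilon> * (gaussian_barrier \<gamma> xc t0 p - exp (- \<gamma> * \<rho>^2)) \<le> u (x0, t0)"
    using hopf_barrier_comparison[OF \<Omega> T \<alpha> cont Ldef sub t0 \<rho> ball_closure ball_interior max ball_strict]
    by blast
  have "\<forall>\<^sub>F h in at_right 0. 0 < h \<and> h < \<nu> \<bullet> (x0 - xc)"
    using normal by (auto intro!: eventually_at_rightI)
  then have "\<forall>\<^sub>F h in at_right 0. (x0 - h *\<^sub>R \<nu>, t0) \<in> closure (Omega_T \<Omega> T)"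
  proof (rule eventually_mono)
    fix h :: real
    assume "0 < h \<and> h < \<nu> \<bullet> (x0 - xc)"
    then have "(x0 - h *\<^sub>R \<nu>, t0) \<in> cball (xc, t0) (dist x0 xc)"
      by (intro normal_segment_in_cball[OF outward_normal_norm[OF \<nu>]]) auto
    then show "(x0 - h *\<^sub>R \<nu>, t0) \<in> closure (Omega_T \<Omega> T)"
      using ball_closure \<rho>(2) by blast
  qed
  then have "\<forall>\<^sub>F h in at_right 0. u (x0 - h *\<^sub>R \<nu>, t0)
      + \<epsilon> * (gaussian_barrier \<gamma> xc t0 (x0 - h *\<^sub>R \<nu>, t0) - exp (- \<gamma> * dist x0 xc ^ 2)) \<le> u (x0, t0)"
    by (rule eventually_mono) (use below \<rho>(2) in simp)
  then show ?thesis
    by (rule normal_derivative_pos_of_barrier[OF outward_normal_norm[OF \<nu>] normal \<open>0 < \<gamma>\<close> \<open>0 < \<epsilon>\<close> _ L])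
qed

lemma hopf_lemma_min:
  fixes \<Omega> :: "'a::euclidean_space set" and u :: "'a \<times> real \<Rightarrow> real"
  assumes \<Omega>: "open \<Omega>" and T: "0 < T" and \<alpha>: "0 < \<alpha>" "\<alpha> < 1"
    and cont: "continuous_on (closure (Omega_T \<Omega> T)) u"
    and Ldef: "\<forall>(x, t)\<in>Omega_T \<Omega> T. L_alpha_defined \<alpha> u x t"
    and super: "\<forall>(x, t)\<in>Omega_T \<Omega> T. 0 \<le> L_alpha \<alpha> u x t"
    and x0: "x0 \<in> frontier \<Omega>" and t0: "t0 \<in> {0<..T}"
    and sphere: "interior_sphere_property (Omega_T \<Omega> T) x0 t0"
    and \<nu>: "outward_normal \<Omega> x0 \<nu>"
    and min: "\<forall>p\<in>closure (Omega_T \<Omega> T). u (x0, t0) \<le> u p"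
    and strict: "\<exists>V. open V \<and> (x0, t0) \<in> V \<and> (\<forall>p\<in>Omega_T \<Omega> T \<inter> V. u (x0, t0) < u p)"
    and L: "has_normal_derivative u \<nu> x0 t0 L"
  shows "L < 0"
proof -
  have "0 < - L"
  proof (rule hopf_lemma_max[OF \<Omega> T \<alpha> _ _ _ x0 t0 sphere \<nu> _ _ has_normal_derivative_uminus[OF L]])
    show "continuous_on (closure (Omega_T \<Omega> T)) (\<lambda>p. - u p)"
      using cont by (rule continuous_on_minus)
    show "\<forall>(x, t)\<in>Omega_T \<Omega> T. L_alpha_defined \<alpha> (\<lambda>p. - u p) x t"
      using Ldef by (auto intro: L_alpha_uminus(1))
    show "\<forall>(x, t)\<in>Omega_T \<Omega> T. L_alpha \<alpha> (\<lambda>p. - u p) x t \<le> 0"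
    proof clarify
      fix x t
      assume "(x, t) \<in> Omega_T \<Omega> T"
      then have "L_alpha_defined \<alpha> u x t" "0 \<le> L_alpha \<alpha> u x t"
        using Ldef super by auto
      then show "L_alpha \<alpha> (\<lambda>p. - u p) x t \<le> 0"
        by (simp add: L_alpha_uminus(2))
    qed
  qed (use min strict in auto)
  then show ?thesis
    by simp
qed

theorem lemma4p1:
  fixes \<Omega> :: "'a::euclidean_space set" and T \<alpha> :: real and u :: "'a \<times> real \<Rightarrow> real"
    and x0 :: 'a and t0 :: real and \<nu> :: 'a
  assumes dom: "bounded_smooth_domain \<Omega>"
    and T: "T > 0" and alpha: "0 < \<alpha>" "\<alpha> < 1"
    and cont: "continuous_on (closure (Omega_T \<Omega> T)) u"
    and Ldef: "\<forall>(x, t)\<in>Omega_T \<Omega> T. L_alpha_defined \<alpha> u x t"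
    and x0: "x0 \<in> frontier \<Omega>" "t0 \<in> {0<..T}"
    and sphere: "interior_sphere_property (Omega_T \<Omega> T) x0 t0"
    and nu: "outward_normal \<Omega> x0 \<nu>"
  shows
    "((\<forall>(x, t)\<in>Omega_T \<Omega> T. L_alpha \<alpha> u x t \<le> 0) \<and>
      (\<forall>p\<in>closure (Omega_T \<Omega> T). u p \<le> u (x0, t0)) \<and>
      (\<exists>V. open V \<and> (x0, t0) \<in> V \<and> (\<forall>p\<in>Omega_T \<Omega> T \<inter> V. u p < u (x0, t0)))
      \<longrightarrow> (\<forall>L. has_normal_derivative u \<nu> x0 t0 L \<longrightarrow> L > 0))
   \<and> ((\<forall>(x, t)\<in>Omega_T \<Omega> T. L_alpha \<alpha> u x t \<ge> 0) \<and>
      (\<forall>p\<in>closure (Omega_T \<Omega> T). u p \<ge> u (x0, t0)) \<and>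
      (\<exists>V. open V \<and> (x0, t0) \<in> V \<and> (\<forall>p\<in>Omega_T \<Omega> T \<inter> V. u p > u (x0, t0)))
      \<longrightarrow> (\<forall>L. has_normal_derivative u \<nu> x0 t0 L \<longrightarrow> L < 0))"
proof -
  \<comment> \<open>only openness of the domain is needed: the boundary enters through nu and the sphere at x0\<close>
  have \<Omega>: "open \<Omega>"
    using dom by (simp add: bounded_smooth_domain_def)
  show ?thesis
    using hopf_lemma_max[OF \<Omega> T alpha cont Ldef _ x0 sphere nu]
      hopf_lemma_min[OF \<Omega> T alpha cont Ldef _ x0 sphere nu]
    by blast
qed

end
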